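(* Let $H$ be a finite-dimensional Hopf algebra over $\mathbb{C}$, $D(H)$ its Drinfeld double with Drinfeld element $u$, and regard $H$ and $H^*$ as subalgebras of $D(H)$. Let $g\in H$ and $\alpha\in H^*$ be grouplike elements such that $\alpha u^m g$ is unipotent in $D(H)$ for some positive integer $m$. Then $g=1$ and $\alpha=1$ (i.e. $\alpha=\varepsilon$, the counit).
   Context: The Drinfeld double $D(H)=H\otimes H^{*\mathrm{cop}}$ is a quasitriangular Hopf algebra containing $H$ and $H^{*\mathrm{cop}}$ as Hopf subalgebras, such that multiplication $H^*\otimes H\to D(H)$ is a linear isomorphism; its universal $R$-matrix is $R=\sum_i a_i\otimes b_i$ (the canonical element), and the Drinfeld element is $u=\sum_i S(b_i)a_i$, $S$ the antipode. An element $x$ is grouplike if $\Delta(x)=x\otimes x$ and $\varepsilon(x)=1$; unipotent means $x-1$ is nilpotent. *)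

theory Defs
  imports Complex_Main
begin

text \<open>A finite-dimensional complex Hopf algebra H is given by structure constants
  with respect to a basis e_i indexed by a finite type 'i.  Vectors of H are
  coordinate functions 'i \<Rightarrow> complex; elements of H* are coordinate functions
  w.r.t. the dual basis f^i (so f x = f(e_x)).
  M i j k : coefficient of e_k in e_i e_j;   U k : coefficient of e_k in 1;
  C k p q : coefficient of e_p \<otimes> e_q in Delta(e_k);   E i = epsilon(e_i);
  S i j : coefficient of e_j in S(e_i).\<close>

type_synonym 'i vec = "'i \<Rightarrow> complex"

definition bas :: "'i \<Rightarrow> 'i vec" where
  "bas i = (\<lambda>k. if k = i then 1 else 0)"

definition pair :: "('i::finite) vec \<Rightarrow> 'i vec \<Rightarrow> complex" where
  "pair f x = (\<Sum>k\<in>UNIV. f k * x k)"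

definition tens :: "'i vec \<Rightarrow> 'j vec \<Rightarrow> ('i \<times> 'j) \<Rightarrow> complex" where
  "tens x y = (\<lambda>(p, q). x p * y q)"

definition hmul :: "('i::finite \<Rightarrow> 'i \<Rightarrow> 'i \<Rightarrow> complex) \<Rightarrow> 'i vec \<Rightarrow> 'i vec \<Rightarrow> 'i vec" where
  "hmul M x y = (\<lambda>k. \<Sum>i\<in>UNIV. \<Sum>j\<in>UNIV. x i * y j * M i j k)"

definition comult :: "('i::finite \<Rightarrow> 'i \<Rightarrow> 'i \<Rightarrow> complex) \<Rightarrow> 'i vec \<Rightarrow> ('i \<times> 'i) \<Rightarrow> complex" where
  "comult C x = (\<lambda>(p, q). \<Sum>k\<in>UNIV. x k * C k p q)"

definition tmul :: "('i::finite \<Rightarrow> 'i \<Rightarrow> 'i \<Rightarrow> complex) \<Rightarrow> ('i \<times> 'i \<Rightarrow> complex) \<Rightarrow> ('i \<times> 'i \<Rightarrow> complex) \<Rightarrow> ('i \<times> 'i \<Rightarrow> complex)" where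
  "tmul M X Y = (\<lambda>(p, q). \<Sum>i\<in>UNIV. \<Sum>j\<in>UNIV. \<Sum>i'\<in>UNIV. \<Sum>j'\<in>UNIV.
       X (i, j) * Y (i', j') * M i i' p * M j j' q)"

definition lin :: "('i::finite \<Rightarrow> 'i \<Rightarrow> complex) \<Rightarrow> 'i vec \<Rightarrow> 'i vec" where
  "lin S x = (\<lambda>j. \<Sum>i\<in>UNIV. x i * S i j)"

definition hopf_algebra ::
  "('i::finite \<Rightarrow> 'i \<Rightarrow> 'i \<Rightarrow> complex) \<Rightarrow> 'i vec \<Rightarrow> ('i \<Rightarrow> 'i \<Rightarrow> 'i \<Rightarrow> complex) \<Rightarrow> 'i vec
     \<Rightarrow> ('i \<Rightarrow> 'i \<Rightarrow> complex) \<Rightarrow> bool" where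
  "hopf_algebra M U C E S \<longleftrightarrow>
     (\<forall>x y z. hmul M (hmul M x y) z = hmul M x (hmul M y z)) \<and>
     (\<forall>x. hmul M U x = x \<and> hmul M x U = x) \<and>
     (\<forall>a p q r. (\<Sum>k\<in>UNIV. C a k r * C k p q) = (\<Sum>k\<in>UNIV. C a p k * C k q r)) \<and>
     (\<forall>a j. (\<Sum>i\<in>UNIV. E i * C a i j) = (if a = j then 1 else 0)) \<and>
     (\<forall>a i. (\<Sum>j\<in>UNIV. C a i j * E j) = (if a = i then 1 else 0)) \<and>
     (\<forall>x y. comult C (hmul M x y) = tmul M (comult C x) (comult C y)) \<and>
     comult C U = tens U U \<and>
     (\<forall>x y. pair E (hmul M x y) = pair E x * pair E y) \<and>
     pair E U = 1 \<and>
     (\<forall>x. (\<lambda>k. \<Sum>i\<in>UNIV. \<Sum>j\<in>UNIV. comult C x (i, j) * hmul M (lin S (bas i)) (bas j) k)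
           = (\<lambda>k. pair E x * U k)) \<and>
     (\<forall>x. (\<lambda>k. \<Sum>i\<in>UNIV. \<Sum>j\<in>UNIV. comult C x (i, j) * hmul M (bas i) (lin S (bas j)) k)
           = (\<lambda>k. pair E x * U k))"

definition grouplike :: "('i::finite \<Rightarrow> 'i \<Rightarrow> 'i \<Rightarrow> complex) \<Rightarrow> 'i vec \<Rightarrow> 'i vec \<Rightarrow> bool" where
  "grouplike C E g \<longleftrightarrow> comult C g = tens g g \<and> pair E g = 1"

text \<open>Hopf structure of H^{*cop}: comultiplication (cop of the dual of
  multiplication), counit = evaluation at 1, product = convolution,
  antipode f \<mapsto> f \<circ> S^{-1}.\<close>
definition dcomult :: "('i::finite \<Rightarrow> 'i \<Rightarrow> 'i \<Rightarrow> complex) \<Rightarrow> 'i vec \<Rightarrow> ('i \<times> 'i) \<Rightarrow> complex" where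
  "dcomult M f = (\<lambda>(p, q). pair f (hmul M (bas q) (bas p)))"

definition dual_grouplike :: "('i::finite \<Rightarrow> 'i \<Rightarrow> 'i \<Rightarrow> complex) \<Rightarrow> 'i vec \<Rightarrow> 'i vec \<Rightarrow> bool" where
  "dual_grouplike M U f \<longleftrightarrow> dcomult M f = tens f f \<and> pair f U = 1"

definition conv :: "('i::finite \<Rightarrow> 'i \<Rightarrow> 'i \<Rightarrow> complex) \<Rightarrow> 'i vec \<Rightarrow> 'i vec \<Rightarrow> 'i vec" where
  "conv C f g = (\<lambda>x. \<Sum>p\<in>UNIV. \<Sum>q\<in>UNIV. C x p q * f p * g q)"

definition Sinv :: "('i::finite \<Rightarrow> 'i \<Rightarrow> complex) \<Rightarrow> 'i vec \<Rightarrow> 'i vec" where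
  "Sinv S = inv (lin S)"

definition dual_antipode :: "('i::finite \<Rightarrow> 'i \<Rightarrow> complex) \<Rightarrow> 'i vec \<Rightarrow> 'i vec" where
  "dual_antipode S f = (\<lambda>x. pair f (Sinv S (bas x)))"

text \<open>h \<rightharpoonup> f \<leftharpoonup> h' : x \<mapsto> f(h' x h)\<close>
definition hit :: "('i::finite \<Rightarrow> 'i \<Rightarrow> 'i \<Rightarrow> complex) \<Rightarrow> 'i vec \<Rightarrow> 'i vec \<Rightarrow> 'i vec \<Rightarrow> 'i vec" where
  "hit M h f h' = (\<lambda>x. pair f (hmul M (hmul M h' (bas x)) h))"

text \<open>Drinfeld double D(H) = H^{*cop} \<bowtie> H (Montgomery's convention).  An element
  is a coordinate function on pairs (a,b), standing for sum X(a,b) f^a e_b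
  (product in D(H) of f^a in H* and e_b in H).  Multiplication:
  (f \<bowtie> h)(f' \<bowtie> h') = f (h_1 \<rightharpoonup> f' \<leftharpoonup> S^{-1} h_3) \<bowtie> h_2 h'.\<close>
definition dmul :: "('i::finite \<Rightarrow> 'i \<Rightarrow> 'i \<Rightarrow> complex) \<Rightarrow> ('i \<Rightarrow> 'i \<Rightarrow> 'i \<Rightarrow> complex)
     \<Rightarrow> ('i \<Rightarrow> 'i \<Rightarrow> complex) \<Rightarrow> ('i \<times> 'i \<Rightarrow> complex) \<Rightarrow> ('i \<times> 'i \<Rightarrow> complex) \<Rightarrow> ('i \<times> 'i \<Rightarrow> complex)" where
  "dmul M C S X Y = (\<lambda>(x, z).
     \<Sum>a\<in>UNIV. \<Sum>b\<in>UNIV. \<Sum>c\<in>UNIV. \<Sum>d\<in>UNIV. X (a, b) * Y (c, d) *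
       (\<Sum>i\<in>UNIV. \<Sum>j\<in>UNIV. \<Sum>k\<in>UNIV. (\<Sum>t\<in>UNIV. C b i t * C t j k) *
          tens (conv C (bas a) (hit M (bas i) (bas c) (Sinv S (bas k)))) (hmul M (bas j) (bas d)) (x, z)))"

definition dunit :: "'i vec \<Rightarrow> 'i vec \<Rightarrow> ('i \<times> 'i \<Rightarrow> complex)" where
  "dunit U E = tens E U"

definition emb_H :: "'i vec \<Rightarrow> 'i vec \<Rightarrow> ('i \<times> 'i \<Rightarrow> complex)" where
  "emb_H E h = tens E h"

definition emb_dual :: "'i vec \<Rightarrow> 'i vec \<Rightarrow> ('i \<times> 'i \<Rightarrow> complex)" where
  "emb_dual U f = tens f U"

fun dpow :: "('i::finite \<Rightarrow> 'i \<Rightarrow> 'i \<Rightarrow> complex) \<Rightarrow> ('i \<Rightarrow> 'i \<Rightarrow> 'i \<Rightarrow> complex)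
     \<Rightarrow> ('i \<Rightarrow> 'i \<Rightarrow> complex) \<Rightarrow> 'i vec \<Rightarrow> 'i vec \<Rightarrow> ('i \<times> 'i \<Rightarrow> complex) \<Rightarrow> nat \<Rightarrow> ('i \<times> 'i \<Rightarrow> complex)" where
  "dpow M C S U E X 0 = dunit U E"
| "dpow M C S U E X (Suc n) = dmul M C S X (dpow M C S U E X n)"

text \<open>Drinfeld element u = sum_i S(b_i) a_i with R = sum_i a_i \<otimes> b_i, a_i = e_i, b_i = f^i.\<close>
definition drinfeld_u :: "('i::finite \<Rightarrow> 'i \<Rightarrow> 'i \<Rightarrow> complex) \<Rightarrow> ('i \<Rightarrow> 'i \<Rightarrow> 'i \<Rightarrow> complex)
     \<Rightarrow> ('i \<Rightarrow> 'i \<Rightarrow> complex) \<Rightarrow> 'i vec \<Rightarrow> 'i vec \<Rightarrow> ('i \<times> 'i \<Rightarrow> complex)" where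
  "drinfeld_u M C S U E = (\<lambda>p. \<Sum>i\<in>UNIV.
      dmul M C S (emb_dual U (dual_antipode S (bas i))) (emb_H E (bas i)) p)"

definition unipotent :: "('i::finite \<Rightarrow> 'i \<Rightarrow> 'i \<Rightarrow> complex) \<Rightarrow> ('i \<Rightarrow> 'i \<Rightarrow> 'i \<Rightarrow> complex)
     \<Rightarrow> ('i \<Rightarrow> 'i \<Rightarrow> complex) \<Rightarrow> 'i vec \<Rightarrow> 'i vec \<Rightarrow> ('i \<times> 'i \<Rightarrow> complex) \<Rightarrow> bool" where
  "unipotent M C S U E X \<longleftrightarrow>
     (\<exists>n. dpow M C S U E (\<lambda>p. X p - dunit U E p) n = (\<lambda>_. 0))"

end

theory Submission
  imports Defs "HOL-Analysis.Cartesian_Space" "HOL-Computational_Algebra.Polynomial"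
begin

text \<open>Write x for \<alpha> u^m g.  Two linear maps send D(H) = H* \<otimes> H onto its factors:
  \<pi> = id \<otimes> \<epsilon> onto H* and \<rho> = ev(1) \<otimes> id onto H.  Neither is an algebra map, but
  \<pi>(X Y) = \<pi>(X) \<pi>(Y) whenever \<pi>(Y) is a linear combination of characters of H, and
  \<rho>(Y Z) = \<rho>(Y) \<rho>(Z) whenever \<rho>(Y) is grouplike.  Since \<pi>(u) = \<epsilon> and \<rho>(u) = 1, we get
  \<pi>(x) = \<alpha> and \<rho>(x) = g, and nilpotency of x - 1 is inherited: (\<alpha> - \<epsilon>)^n = 0 in H* and
  (g - 1)^n = 0 in H.  Then for every h the value \<alpha>^k(h), the sum over j < n of
  (k choose j) (\<alpha> - \<epsilon>)^j(h), is a polynomial in k; as \<alpha>^k is a character,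
  \<alpha>^k(h h) = \<alpha>^k(h)^2, and a family of polynomials of bounded degree closed under squaring
  consists of constants.  Hence \<alpha> = \<alpha>^0 = \<epsilon>, and likewise g = 1.

  The inverse of the antipode enters the multiplication of D(H), so we also need that S is
  bijective; this is the classical argument via a nonzero integral of H*.\<close>

hide_type (open) Finite_Cartesian_Product.vec

lemma sum_bas_left[simp]: "(\<Sum>a\<in>(UNIV::'i::finite set). bas i a * f a) = (f i :: complex)"
  by (simp add: bas_def if_distrib[of "\<lambda>x. x * _"] cong: if_cong)
lemma sum_bas_right[simp]: "(\<Sum>a\<in>(UNIV::'i::finite set). f a * bas i a) = (f i :: complex)"
  by (simp add: bas_def if_distrib[of "\<lambda>x. _ * x"] cong: if_cong)
lemma bas_commute: "bas k j = bas j k"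
  by (simp add: bas_def)

definition pair2 :: "('i::finite \<Rightarrow> 'j::finite \<Rightarrow> complex) \<Rightarrow> ('i \<Rightarrow> 'j \<Rightarrow> complex) \<Rightarrow> complex" where
  "pair2 X F = (\<Sum>p\<in>UNIV. \<Sum>q\<in>UNIV. X p q * F p q)"

definition pair3 :: "('i::finite \<Rightarrow> 'j::finite \<Rightarrow> 'k::finite \<Rightarrow> complex) \<Rightarrow> ('i \<Rightarrow> 'j \<Rightarrow> 'k \<Rightarrow> complex) \<Rightarrow> complex" where
  "pair3 X F = (\<Sum>p\<in>UNIV. \<Sum>q\<in>UNIV. \<Sum>r\<in>UNIV. X p q r * F p q r)"

lemma pair_cmult[simp]: "pair x (\<lambda>k. c * F k) = c * pair x F"
  by (simp add: pair_def sum_distrib_left mult_ac)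
lemma pair_multc[simp]: "pair x (\<lambda>k. F k * c) = pair x F * c"
  by (simp add: pair_def sum_distrib_right mult_ac)
lemma pair_zero[simp]: "pair x (\<lambda>k. 0) = 0"
  by (simp add: pair_def)
lemma pair_sum[simp]: "pair x (\<lambda>k. \<Sum>j\<in>A. F j k) = (\<Sum>j\<in>A. pair x (F j))"
  unfolding pair_def sum_distrib_left by (rule sum.swap)
lemma pair_bas_left[simp]: "pair (bas i) F = F i"
  by (simp add: pair_def)
lemma pair_bas_right[simp]: "pair x (bas i) = x i"
  by (simp add: pair_def)

lemma pair_cmult_left: "pair (\<lambda>k. c * x k) F = c * pair x F"
  unfolding pair_def sum_distrib_left by (simp add: mult_ac)
lemma pair_multc_left: "pair (\<lambda>k. x k * c) F = pair x F * c"
  unfolding pair_def sum_distrib_right by (simp add: mult_ac)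
lemma pair_diff_left: "pair (\<lambda>k. x k - y k) F = pair x F - pair y F"
  by (simp add: pair_def left_diff_distrib sum_subtractf)
lemma pair_sum_left: "pair (\<lambda>k. \<Sum>i\<in>I. f i k) F = (\<Sum>i\<in>I. pair (f i) F)"
  by (simp add: pair_def sum_distrib_right) (rule sum.swap)

lemma pair_commute: "pair x y = pair y x"
  by (simp add: pair_def mult.commute)
lemma pair_cong: "(\<And>l. X l = Y l) \<Longrightarrow> pair X F = pair Y F"
  by (simp add: pair_def)
lemma pair_swap:
  "pair x (\<lambda>i. pair y (\<lambda>j. F i j))
    = pair y (\<lambda>j. pair x (\<lambda>i. F i j))"
  unfolding pair_def sum_distrib_left by (subst sum.swap) (simp add: mult.left_commute)
lemma pair_contract:
  "pair x (\<lambda>i. pair (Y i) F) = pair (\<lambda>l. pair x (\<lambda>i. Y i l)) F"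
  unfolding pair_def sum_distrib_left sum_distrib_right
  by (subst sum.swap) (simp add: mult.assoc)

lemma pair2_cmult[simp]: "pair2 X (\<lambda>p q. c * F p q) = c * pair2 X F"
  by (simp add: pair2_def sum_distrib_left mult_ac)
lemma pair2_multc[simp]: "pair2 X (\<lambda>p q. F p q * c) = pair2 X F * c"
  by (simp add: pair2_def sum_distrib_right mult_ac)
lemma pair2_diff[simp]: "pair2 X (\<lambda>p q. F p q - G p q) = pair2 X F - pair2 X G"
  by (simp add: pair2_def right_diff_distrib sum_subtractf)
lemma pair2_zero[simp]: "pair2 X (\<lambda>p q. 0) = 0"
  by (simp add: pair2_def)
lemma pair2_sum[simp]: "pair2 X (\<lambda>p q. \<Sum>j\<in>A. F j p q) = (\<Sum>j\<in>A. pair2 X (F j))"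
  unfolding pair2_def sum_distrib_left sum.swap[of _ A] ..

lemma pair2_as_pair: "pair2 X F = pair (\<lambda>z. X (fst z) (snd z)) (\<lambda>z. F (fst z) (snd z))"
  unfolding pair2_def pair_def by (simp add: sum.cartesian_product case_prod_beta flip: UNIV_Times_UNIV)
lemma pair2_pair_swap:
  "pair2 X (\<lambda>p q. pair y (\<lambda>j. F p q j))
    = pair y (\<lambda>j. pair2 X (\<lambda>p q. F p q j))"
  unfolding pair2_as_pair by (rule pair_swap)
lemma pair2_swap:
  "pair2 X (\<lambda>p q. pair2 Y (\<lambda>r s. F p q r s))
    = pair2 Y (\<lambda>r s. pair2 X (\<lambda>p q. F p q r s))"
  unfolding pair2_as_pair by (rule pair_swap)
lemma pair_pair2_contract:
  "pair x (\<lambda>k. pair2 (Y k) F) = pair2 (\<lambda>p q. pair x (\<lambda>k. Y k p q)) F"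
  unfolding pair2_as_pair pair_contract ..
lemma pair_pair_left:
  "pair (\<lambda>z. pair y (\<lambda>a. G a z)) F
    = pair y (\<lambda>a. pair (\<lambda>z. G a z) F)"
  by (simp add: pair_contract)
lemma pair_pair2_left:
  "pair (\<lambda>z. pair2 Y (\<lambda>a b. G a b z)) F
    = pair2 Y (\<lambda>a b. pair (\<lambda>z. G a b z) F)"
  unfolding pair2_as_pair by (rule pair_pair_left)

lemma pair2_tensor: "pair2 X (\<lambda>p q. F p * G q) = pair (\<lambda>p. pair (X p) G) F"
  unfolding pair2_def pair_def sum_distrib_left sum_distrib_right
  by (simp add: mult_ac)
lemma pair2_tensor_swap:
  "pair2 X (\<lambda>p q. G p * F q) = pair (\<lambda>q. pair (\<lambda>p. X p q) G) F"
  unfolding pair2_def pair_def sum_distrib_left sum_distrib_right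
  by (subst sum.swap) (simp add: mult_ac)
lemma pair2_bas[simp]: "pair2 X (\<lambda>x y. bas p x * bas q y) = X p q"
  by (simp add: pair2_tensor)
lemma pair2_expand_left:
  "pair2 X (\<lambda>p q. g p * m q)
    = (\<Sum>p'\<in>UNIV. g p' * pair2 X (\<lambda>p q. bas p' p * m q))"
  by (simp add: pair2_tensor pair_def) (simp add: mult.commute)

lemma fun_expand_bas:
  "(F::'i::finite \<Rightarrow> complex) = (\<lambda>r. \<Sum>k\<in>UNIV. F k * bas k r)"
  by (rule ext) (simp add: bas_def if_distrib[of "\<lambda>x. _ * x"] sum.delta' cong: if_cong)
lemma fun2_expand_bas:
  "(F::'i::finite \<Rightarrow> 'j::finite \<Rightarrow> complex)
      = (\<lambda>x y. \<Sum>p\<in>UNIV. \<Sum>q\<in>UNIV. F p q * (bas p x * bas q y))"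
  by (intro ext) (simp add: bas_def if_distrib[of "\<lambda>x. _ * x"] sum.delta' cong: if_cong)

lemma sum_swap_23:
  "(\<Sum>a\<in>A. \<Sum>b\<in>B. \<Sum>c\<in>C. f a b c)
    = (\<Sum>a\<in>A. \<Sum>c\<in>C. \<Sum>b\<in>B. f a b c)"
  by (rule sum.cong[OF refl], rule sum.swap)
lemma sum_swap_34:
  "(\<Sum>a\<in>A. \<Sum>b\<in>B. \<Sum>c\<in>C. \<Sum>d\<in>D. f a b c d)
      = (\<Sum>a\<in>A. \<Sum>b\<in>B. \<Sum>d\<in>D. \<Sum>c\<in>C. f a b c d)"
  by (rule sum.cong[OF refl], rule sum.cong[OF refl], rule sum.swap)
lemma sum_rotate3:
  "(\<Sum>a\<in>A. \<Sum>b\<in>B. \<Sum>c\<in>D. f a b c)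
    = (\<Sum>c\<in>D. \<Sum>a\<in>A. \<Sum>b\<in>B. (f a b c::complex))"
  by (subst sum_swap_23) (rule sum.swap)
lemma sum_reverse3:
  "(\<Sum>j\<in>A. \<Sum>k\<in>B. \<Sum>p\<in>D. F j k p)
    = (\<Sum>p\<in>D. \<Sum>k\<in>B. \<Sum>j\<in>A. (F j k p :: complex))"
  by (subst sum_rotate3) (rule sum.cong[OF refl], rule sum.swap)

lemma pair2_contract_left:
  "pair2 X (\<lambda>t r. pair2 (Y t) (\<lambda>p q. F p q r))
    = pair3 (\<lambda>p q r. \<Sum>t\<in>UNIV. X t r * Y t p q) F"
proof -
  have "pair2 X (\<lambda>t r. pair2 (Y t) (\<lambda>p q. F p q r))
      = (\<Sum>t\<in>UNIV. \<Sum>r\<in>UNIV. \<Sum>p\<in>UNIV. \<Sum>q\<in>UNIV. X t r * Y t p q * F p q r)"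
    by (simp only: pair2_def sum_distrib_left mult.assoc)
  also have "\<dots> = (\<Sum>t\<in>UNIV. \<Sum>p\<in>UNIV. \<Sum>r\<in>UNIV. \<Sum>q\<in>UNIV. X t r * Y t p q * F p q r)"
    by (rule sum_swap_23)
  also have "\<dots> = (\<Sum>t\<in>UNIV. \<Sum>p\<in>UNIV. \<Sum>q\<in>UNIV. \<Sum>r\<in>UNIV. X t r * Y t p q * F p q r)"
    by (rule sum_swap_34)
  also have "\<dots> = (\<Sum>p\<in>UNIV. \<Sum>t\<in>UNIV. \<Sum>q\<in>UNIV. \<Sum>r\<in>UNIV. X t r * Y t p q * F p q r)"
    by (rule sum.swap)
  also have "\<dots> = (\<Sum>p\<in>UNIV. \<Sum>q\<in>UNIV. \<Sum>t\<in>UNIV. \<Sum>r\<in>UNIV. X t r * Y t p q * F p q r)"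
    by (rule sum_swap_23)
  also have "\<dots> = (\<Sum>p\<in>UNIV. \<Sum>q\<in>UNIV. \<Sum>r\<in>UNIV. \<Sum>t\<in>UNIV. X t r * Y t p q * F p q r)"
    by (rule sum_swap_34)
  also have "\<dots> = pair3 (\<lambda>p q r. \<Sum>t\<in>UNIV. X t r * Y t p q) F"
    by (simp add: pair3_def sum_distrib_right)
  finally show ?thesis .
qed

lemma pair2_contract_right:
  "pair2 X (\<lambda>p t. pair2 (Y t) (\<lambda>q r. F p q r))
    = pair3 (\<lambda>p q r. \<Sum>t\<in>UNIV. X p t * Y t q r) F"
proof -
  have "pair2 X (\<lambda>p t. pair2 (Y t) (\<lambda>q r. F p q r))
      = (\<Sum>p\<in>UNIV. \<Sum>t\<in>UNIV. \<Sum>q\<in>UNIV. \<Sum>r\<in>UNIV. X p t * Y t q r * F p q r)"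
    by (simp only: pair2_def sum_distrib_left mult.assoc)
  also have "\<dots> = (\<Sum>p\<in>UNIV. \<Sum>q\<in>UNIV. \<Sum>t\<in>UNIV. \<Sum>r\<in>UNIV. X p t * Y t q r * F p q r)"
    by (rule sum_swap_23)
  also have "\<dots> = (\<Sum>p\<in>UNIV. \<Sum>q\<in>UNIV. \<Sum>r\<in>UNIV. \<Sum>t\<in>UNIV. X p t * Y t q r * F p q r)"
    by (rule sum_swap_34)
  also have "\<dots> = pair3 (\<lambda>p q r. \<Sum>t\<in>UNIV. X p t * Y t q r) F"
    by (simp add: pair3_def sum_distrib_right)
  finally show ?thesis .
qed

lemma hmul_eq_pair: "hmul M x y k = pair x (\<lambda>i. pair y (\<lambda>j. M i j k))"
  unfolding hmul_def pair_def sum_distrib_left mult.assoc ..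
lemma hmul_bas: "hmul M (bas i) (bas j) = M i j"
  unfolding hmul_def by (simp add: mult.assoc flip: sum_distrib_left)
lemma comult_eq_pair: "comult C x (p, q) = pair x (\<lambda>k. C k p q)"
  by (simp add: comult_def pair_def)
lemma lin_eq_pair: "lin S x j = pair x (\<lambda>i. S i j)"
  by (simp add: lin_def pair_def)
lemma lin_bas: "lin S (bas i) = S i"
  by (simp add: lin_eq_pair[abs_def])
lemma lin_diff: "lin A (\<lambda>i. x i - y i) = (\<lambda>j. lin A x j - lin A y j)"
  by (simp add: lin_def left_diff_distrib sum_subtractf)

lemma surj_lin_if_inj:
  fixes A :: "'i::finite \<Rightarrow> 'i \<Rightarrow> complex"
  assumes "inj (lin A)"
  shows "surj (lin A)"
proof -
  define f :: "complex^'i \<Rightarrow> complex^'i" where "f v = (\<chi> j. lin A (vec_nth v) j)" for v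
  have "Vector_Spaces.linear (*s) (*s) f"
    by unfold_locales
      (simp_all add: f_def vec_eq_iff lin_def sum.distrib sum_distrib_left distrib_right mult.assoc)
  moreover have "inj f"
    using assms by (auto simp: inj_def f_def vec_eq_iff fun_eq_iff)
  ultimately have "surj f"
    by (rule vec.linear_inj_imp_surj)
  show ?thesis
    unfolding surj_def
  proof
    fix y :: "'i vec"
    obtain v where "f v = vec_lambda y"
      using \<open>surj f\<close> by (metis surjD)
    then have "lin A (vec_nth v) = y"
      by (simp add: f_def vec_eq_iff fun_eq_iff)
    then show "\<exists>x. y = lin A x"
      by metis
  qed
qed

lemma tens_apply: "tens x y (p, q) = x p * y q"
  by (simp add: tens_def)
lemma tmul_eq_pair2:
  "tmul M X Y (p, q) = pair2 (\<lambda>i j. X (i,j)) (\<lambda>i j. pair2 (\<lambda>i j. Y (i,j)) (\<lambda>i' j'. M i i' p * M j j' q))"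
  unfolding tmul_def pair2_def by (simp add: sum_distrib_left mult.assoc)
lemma conv_eq_pair2: "conv C f g x = pair2 (C x) (\<lambda>p q. f p * g q)"
  by (simp add: conv_def pair2_def mult.assoc)
lemma conv_eq_pair2_fun: "conv C f g = (\<lambda>x. pair2 (C x) (\<lambda>p q. f p * g q))"
  by (rule ext) (rule conv_eq_pair2)

section \<open>Binomial expansions and polynomials closed under squaring\<close>

definition binomial_poly :: "nat \<Rightarrow> complex poly" where
  "binomial_poly j = smult (1 / fact j) (\<Prod>i=0..<j. [:- of_nat i, 1:])"

lemma poly_binomial_poly: "poly (binomial_poly j) (of_nat k) = of_nat (k choose j)"
  by (simp add: binomial_poly_def poly_prod binomial_gbinomial gbinomial_prod_rev divide_inverse mult.commute)

lemma poly_eq_0_if_nat_roots: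
  assumes "\<And>k::nat. poly p (of_nat k :: complex) = 0"
  shows "p = 0"
proof (rule ccontr)
  assume "p \<noteq> 0"
  moreover have "\<nat> \<subseteq> {x. poly p x = 0}"
    using assms by (auto elim: Nats_cases)
  ultimately show False
    using Nats_infinite poly_roots_finite finite_subset by blast
qed

lemma degree_0_if_square_closed:
  fixes P :: "'a \<Rightarrow> complex poly"
  assumes square: "\<And>x. \<exists>x'. P x' = (P x)^2" and bounded: "\<And>x. degree (P x) \<le> N"
  shows "degree (P x) = 0"
proof -
  define D where "D = Max (range (\<lambda>x. degree (P x)))"
  have fin: "finite (range (\<lambda>x. degree (P x)))"
    by (rule finite_subset[of _ "{0..N}"]) (auto simp: bounded)
  have le: "degree (P y) \<le> D" for y
    unfolding D_def using fin by (rule Max_ge) simp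
  obtain x0 where x0: "degree (P x0) = D"
    unfolding D_def using Max_in[OF fin] by auto
  obtain x' where x': "P x' = (P x0)^2"
    using square by blast
  have "D = 0"
  proof (cases "P x0 = 0")
    case True
    then show ?thesis using x0 by simp
  next
    case False
    then have "degree (P x') = 2 * D"
      using x' x0 by (simp add: degree_power_eq)
    then show ?thesis
      using le[of x'] by simp
  qed
  then show ?thesis
    using le[of x] by simp
qed

lemma binomial_sum_const_if_square_closed:
  fixes F :: "'a \<Rightarrow> nat \<Rightarrow> complex" and c :: "'a \<Rightarrow> nat \<Rightarrow> complex"
  assumes binomial: "\<And>x k. F x k = (\<Sum>j<n. of_nat (k choose j) * c x j)"
    and square: "\<And>x. \<exists>x'. \<forall>k. F x' k = (F x k)^2"
  shows "F x k = F x 0"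
proof -
  define P where "P x = (\<Sum>j<n. smult (c x j) (binomial_poly j))" for x
  have F_eq: "F x k = poly (P x) (of_nat k)" for x k
    by (simp add: binomial P_def poly_sum poly_binomial_poly mult.commute)
  have "\<exists>x'. P x' = (P x)^2" for x
  proof -
    obtain x' where "\<forall>k. F x' k = (F x k)^2"
      using square by blast
    then have "poly (P x' - (P x)^2) (of_nat k) = 0" for k
      by (simp add: F_eq)
    then have "P x' - (P x)^2 = 0"
      by (rule poly_eq_0_if_nat_roots)
    then show ?thesis by auto
  qed
  moreover have "degree (P x) \<le> (\<Sum>j<n. degree (binomial_poly j))" for x
    unfolding P_def
  proof (rule degree_sum_le)
    fix j
    assume "j \<in> {..<n}"
    then have "degree (binomial_poly j) \<le> (\<Sum>j<n. degree (binomial_poly j))"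
      by (intro member_le_sum) auto
    then show "degree (smult (c x j) (binomial_poly j)) \<le> (\<Sum>j<n. degree (binomial_poly j))"
      using degree_smult_le order_trans by blast
  qed simp
  ultimately have "degree (P x) = 0"
    by (rule degree_0_if_square_closed)
  then obtain a where "P x = [:a:]"
    by (metis degree_eq_zeroE)
  then show ?thesis
    by (simp add: F_eq)
qed

lemma sum_binomial_Suc:
  "(\<Sum>j\<le>Suc k. of_nat (Suc k choose j) * f j)
     = (\<Sum>j\<le>k. of_nat (k choose j) * f j) + (\<Sum>j\<le>k. of_nat (k choose j) * (f (Suc j) :: complex))"
proof -
  have shift: "(\<Sum>j\<le>k. of_nat (k choose j) * f j)
      = f 0 + (\<Sum>j\<le>k. of_nat (k choose Suc j) * f (Suc j))"
  proof -
    have "(\<Sum>j\<le>Suc k. of_nat (k choose j) * f j) = (\<Sum>j\<le>k. of_nat (k choose j) * f j)"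
      by (simp add: sum.atMost_Suc binomial_eq_0)
    moreover have "(\<Sum>j\<le>Suc k. of_nat (k choose j) * f j)
        = f 0 + (\<Sum>j\<le>k. of_nat (k choose Suc j) * f (Suc j))"
      by (subst sum.atMost_Suc_shift) simp
    ultimately show ?thesis by (metis (no_types))
  qed
  have "(\<Sum>j\<le>Suc k. of_nat (Suc k choose j) * f j)
      = f 0 + (\<Sum>j\<le>k. of_nat (Suc k choose Suc j) * f (Suc j))"
    by (subst sum.atMost_Suc_shift) simp
  also have "\<dots> = f 0 + (\<Sum>j\<le>k. of_nat (k choose Suc j) * f (Suc j)) + (\<Sum>j\<le>k. of_nat (k choose j) * f (Suc j))"
    by (simp add: distrib_right sum.distrib)
  finally show ?thesis
    using shift by simp
qed

lemma funpow_add_linear_binomial: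
  fixes L :: "('a \<Rightarrow> complex) \<Rightarrow> 'a \<Rightarrow> complex"
  assumes linear: "\<And>(d::nat \<Rightarrow> complex) f k. L (\<lambda>s. \<Sum>j\<le>k. d j * f j s)
      = (\<lambda>s. \<Sum>j\<le>k. d j * L (f j) s)"
  shows "((\<lambda>w s. w s + L w s) ^^ k) v
      = (\<lambda>s. \<Sum>j\<le>k. of_nat (k choose j) * (L ^^ j) v s)"
proof (induction k)
  case 0
  show ?case by simp
next
  case (Suc k)
  have "((\<lambda>w s. w s + L w s) ^^ Suc k) v
      = (\<lambda>s. (\<Sum>j\<le>k. of_nat (k choose j) * (L ^^ j) v s) + (\<Sum>j\<le>k. of_nat (k choose j) * (L ^^ Suc j) v s))"
    by (simp add: Suc.IH linear)
  also have "\<dots> = (\<lambda>s. \<Sum>j\<le>Suc k. of_nat (Suc k choose j) * (L ^^ j) v s)"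
    by (simp only: sum_binomial_Suc)
  finally show ?case .
qed

lemma funpow_add_nilpotent_binomial:
  fixes L :: "('a \<Rightarrow> complex) \<Rightarrow> 'a \<Rightarrow> complex"
  assumes linear: "\<And>(d::nat \<Rightarrow> complex) f k. L (\<lambda>s. \<Sum>j\<le>k. d j * f j s)
      = (\<lambda>s. \<Sum>j\<le>k. d j * L (f j) s)"
    and nilpotent: "(L ^^ n) v = (\<lambda>_. 0)"
  shows "((\<lambda>w s. w s + L w s) ^^ k) v
      = (\<lambda>s. \<Sum>j<n. of_nat (k choose j) * (L ^^ j) v s)"
proof -
  have zero: "L (\<lambda>_. 0) = (\<lambda>_. 0)"
    using linear[of "\<lambda>_. 0" "\<lambda>_ _. 0" 0] by simp
  have vanish: "(L ^^ j) v = (\<lambda>_. 0)" if "n \<le> j" for j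
    using that by (induction j rule: dec_induct) (simp_all add: nilpotent zero)
  have "(\<Sum>j\<le>k. of_nat (k choose j) * (L ^^ j) v s)
      = (\<Sum>j<n. of_nat (k choose j) * (L ^^ j) v s)" for s
  proof -
    have "(\<Sum>j\<le>k. of_nat (k choose j) * (L ^^ j) v s)
        = (\<Sum>j<Suc (k + n). of_nat (k choose j) * (L ^^ j) v s)"
      by (rule sum.mono_neutral_left) auto
    also have "\<dots> = (\<Sum>j<n. of_nat (k choose j) * (L ^^ j) v s)"
      by (rule sum.mono_neutral_right) (auto simp: vanish)
    finally show ?thesis .
  qed
  then show ?thesis
    by (simp add: funpow_add_linear_binomial[OF linear])
qed

lemma sum_mult_diff_Suc:
  "(\<Sum>j\<le>n. d j * (a (Suc j) - a j))
     = (\<Sum>j\<le>Suc n. ((if j = 0 then 0 else d (j - 1)) - (if j \<le> n then d j else 0)) * (a j :: complex))"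
proof -
  have "(\<Sum>j\<le>Suc n. ((if j = 0 then 0 else d (j - 1)) - (if j \<le> n then d j else 0)) * a j)
     = (\<Sum>j\<le>Suc n. (if j = 0 then 0 else d (j - 1)) * a j) - (\<Sum>j\<le>Suc n. (if j \<le> n then d j else 0) * a j)"
    by (simp add: left_diff_distrib sum_subtractf)
  also have "(\<Sum>j\<le>Suc n. (if j = 0 then 0 else d (j - 1)) * a j)
      = (\<Sum>j\<le>n. d j * a (Suc j))"
    by (subst sum.atMost_Suc_shift) simp
  also have "(\<Sum>j\<le>Suc n. (if j \<le> n then d j else 0) * a j) = (\<Sum>j\<le>n. d j * a j)"
    by (simp add: sum.atMost_Suc)
  finally show ?thesis
    by (simp add: right_diff_distrib sum_subtractf)
qed

section \<open>The Hopf axioms in coordinates\<close>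

locale hopf =
  fixes M :: "'i::finite \<Rightarrow> 'i \<Rightarrow> 'i \<Rightarrow> complex" and U :: "'i vec"
    and C :: "'i \<Rightarrow> 'i \<Rightarrow> 'i \<Rightarrow> complex" and E :: "'i vec" and S :: "'i \<Rightarrow> 'i \<Rightarrow> complex"
  assumes hopf_algebra: "hopf_algebra M U C E S"
begin

text \<open>Reading a coefficient function G as the functional e_k \<mapsto> G k on H:
  mm a b G = G(e_a e_b), ss a G = G(S e_a), uu G = G(1), and for G of two indices
  dd a G = G(\<Delta> e_a).\<close>

abbreviation "mm a b G \<equiv> pair (M a b) G"
abbreviation "ss a G \<equiv> pair (S a) G"
abbreviation "dd a G \<equiv> pair2 (C a) G"
abbreviation "uu G \<equiv> pair U G"

lemma hmul_assoc: "hmul M (hmul M x y) z = hmul M x (hmul M y z)"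
  using hopf_algebra unfolding hopf_algebra_def by blast
lemma hmul_unit_left: "hmul M U x = x"
  using hopf_algebra unfolding hopf_algebra_def by blast
lemma hmul_unit_right: "hmul M x U = x"
  using hopf_algebra unfolding hopf_algebra_def by blast

lemma mult_assoc: "mm a b (\<lambda>t. mm t c F) = mm b c (\<lambda>t. mm a t F)"
proof -
  have "mm i j (\<lambda>t. M t k l) = mm j k (\<lambda>t. M i t l)" for i j k l
    using fun_cong[OF hmul_assoc[of "bas i" "bas j" "bas k"], of l] by (simp add: hmul_bas hmul_eq_pair)
  then show ?thesis
    unfolding pair_contract by (intro pair_cong)
qed

lemma unit_left: "uu (\<lambda>i. mm i b F) = F b"
proof -
  have "uu (\<lambda>i. M i b k) = bas b k" for k
    using fun_cong[OF hmul_unit_left[of "bas b"], of k] by (simp add: hmul_eq_pair)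
  then show ?thesis
    unfolding pair_contract by simp
qed

lemma unit_right: "uu (\<lambda>j. mm a j F) = F a"
proof -
  have "uu (\<lambda>j. M a j k) = bas a k" for k
    using fun_cong[OF hmul_unit_right[of "bas a"], of k] by (simp add: hmul_eq_pair)
  then show ?thesis
    unfolding pair_contract by simp
qed

lemma coassoc:
  "dd a (\<lambda>t r. dd t (\<lambda>p q. F p q r))
    = dd a (\<lambda>p t. dd t (\<lambda>q r. F p q r))"
proof -
  have "(\<Sum>k\<in>UNIV. C a k r * C k p q) = (\<Sum>k\<in>UNIV. C a p k * C k q r)" for p q r
    using hopf_algebra unfolding hopf_algebra_def by blast
  then show ?thesis
    unfolding pair2_contract_left pair2_contract_right by (simp add: pair3_def)
qed

lemma counit_left: "dd a (\<lambda>p q. E p * F q) = F a"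
proof -
  have "(\<Sum>i\<in>UNIV. E i * C a i j) = bas a j" for j
    using hopf_algebra unfolding hopf_algebra_def bas_def by presburger
  then show ?thesis
    unfolding pair2_tensor_swap by (simp add: pair_def mult.commute)
qed

lemma counit_right: "dd a (\<lambda>p q. F p * E q) = F a"
proof -
  have "(\<Sum>j\<in>UNIV. C a i j * E j) = bas a i" for i
    using hopf_algebra unfolding hopf_algebra_def bas_def by presburger
  then show ?thesis
    unfolding pair2_tensor by (simp add: pair_def)
qed

lemma counit_right_comm: "dd a (\<lambda>p q. E q * F p) = F a"
  using counit_right[of a F] by (simp add: mult.commute)

lemma comult_mult:
  "mm a b (\<lambda>k. dd k F)
      = dd a (\<lambda>a1 a2. dd b (\<lambda>b1 b2. mm a1 b1 (\<lambda>p. mm a2 b2 (\<lambda>q. F p q))))"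
proof -
  have "mm a b (\<lambda>k. C k p q)
      = dd a (\<lambda>i j. dd b (\<lambda>i' j'. M i i' p * M j j' q))" for p q
  proof -
    have "comult C (hmul M (bas a) (bas b)) = tmul M (comult C (bas a)) (comult C (bas b))"
      using hopf_algebra unfolding hopf_algebra_def by blast
    from fun_cong[OF this, of "(p, q)"] show ?thesis
      unfolding hmul_bas comult_eq_pair tmul_eq_pair2 by simp
  qed
  then show ?thesis
    by (subst (1 2) fun2_expand_bas[of F]) (simp add: pair_pair2_contract)
qed

lemma comult_mult_coeff:
  "mm a b (\<lambda>k. C k p q) = dd a (\<lambda>i j. dd b (\<lambda>i' j'. M i i' p * M j j' q))"
  using comult_mult[of a b "\<lambda>x y. bas p x * bas q y"] by simp

lemma comult_unit: "uu (\<lambda>k. dd k F) = uu (\<lambda>p. uu (\<lambda>q. F p q))"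
proof -
  have "comult C U = tens U U"
    using hopf_algebra unfolding hopf_algebra_def by blast
  then have "uu (\<lambda>k. C k p q) = U p * U q" for p q
    by (metis comult_eq_pair pair_commute tens_apply)
  then show ?thesis
    by (subst (1 2) fun2_expand_bas[of F]) (simp add: pair_pair2_contract)
qed

lemma comult_unit_coeff: "uu (\<lambda>k. C k p q) = U p * U q"
  using comult_unit[of "\<lambda>x y. bas p x * bas q y"] by simp

lemma counit_mult: "mm a b E = E a * E b"
proof -
  have "pair E (hmul M (bas a) (bas b)) = pair E (bas a) * pair E (bas b)"
    using hopf_algebra unfolding hopf_algebra_def by blast
  then show ?thesis
    by (simp add: hmul_bas pair_commute)
qed

lemma counit_unit: "uu E = 1"
  using hopf_algebra unfolding hopf_algebra_def by (simp add: pair_commute)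

lemma antipode_left: "dd a (\<lambda>p q. ss p (\<lambda>r. mm r q F)) = E a * uu F"
proof -
  have "dd a (\<lambda>i j. ss i (\<lambda>p. M p j k)) = E a * U k" for k
  proof -
    have "(\<lambda>k. \<Sum>i\<in>UNIV. \<Sum>j\<in>UNIV. comult C (bas a) (i, j) * hmul M (lin S (bas i)) (bas j) k)
        = (\<lambda>k. pair E (bas a) * U k)"
      using hopf_algebra unfolding hopf_algebra_def by blast
    from fun_cong[OF this, of k] show ?thesis
      by (simp add: comult_eq_pair hmul_eq_pair lin_bas pair2_def)
  qed
  then show ?thesis
    by (subst (1 2) fun_expand_bas[of F]) (simp add: sum_distrib_left mult_ac)
qed

lemma antipode_right: "dd a (\<lambda>p q. ss q (\<lambda>r. mm p r F)) = E a * uu F"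
proof -
  have "dd a (\<lambda>i j. ss j (\<lambda>p. M i p k)) = E a * U k" for k
  proof -
    have "(\<lambda>k. \<Sum>i\<in>UNIV. \<Sum>j\<in>UNIV. comult C (bas a) (i, j) * hmul M (bas i) (lin S (bas j)) k)
        = (\<lambda>k. pair E (bas a) * U k)"
      using hopf_algebra unfolding hopf_algebra_def by blast
    from fun_cong[OF this, of k] show ?thesis
      by (simp add: comult_eq_pair hmul_eq_pair lin_bas pair2_def)
  qed
  then show ?thesis
    by (subst (1 2) fun_expand_bas[of F]) (simp add: sum_distrib_left mult_ac)
qed

lemma mm_ss:
  "mm p q (\<lambda>i. ss r (\<lambda>j. F i j)) = ss r (\<lambda>j. mm p q (\<lambda>i. F i j))"
  by (rule pair_swap)
lemma ss_mm:
  "ss r (\<lambda>j. mm p q (\<lambda>i. F i j)) = mm p q (\<lambda>i. ss r (\<lambda>j. F i j))"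
  by (rule pair_swap)
lemma mm_mm:
  "mm p q (\<lambda>i. mm r t (\<lambda>j. F i j))
    = mm r t (\<lambda>j. mm p q (\<lambda>i. F i j))"
  by (rule pair_swap)
lemma uu_ss:
  "uu (\<lambda>i. ss r (\<lambda>j. F i j)) = ss r (\<lambda>j. uu (\<lambda>i. F i j))"
  by (rule pair_swap)
lemma uu_mm:
  "uu (\<lambda>i. mm p r (\<lambda>j. F i j)) = mm p r (\<lambda>j. uu (\<lambda>i. F i j))"
  by (rule pair_swap)
lemma dd_mm:
  "dd a (\<lambda>p q. mm r t (\<lambda>j. F p q j))
    = mm r t (\<lambda>j. dd a (\<lambda>p q. F p q j))"
  by (rule pair2_pair_swap)
lemma dd_ss:
  "dd a (\<lambda>p q. ss r (\<lambda>j. F p q j))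
    = ss r (\<lambda>j. dd a (\<lambda>p q. F p q j))"
  by (rule pair2_pair_swap)
lemma dd_dd:
  "dd a (\<lambda>p q. dd b (\<lambda>r t. F p q r t))
    = dd b (\<lambda>r t. dd a (\<lambda>p q. F p q r t))"
  by (rule pair2_swap)
lemma ss_dd:
  "ss r (\<lambda>j. dd a (\<lambda>p q. F j p q))
    = dd a (\<lambda>p q. ss r (\<lambda>j. F j p q))"
  by (rule pair2_pair_swap[symmetric])
lemma uu_dd:
  "uu (\<lambda>j. dd a (\<lambda>p q. F j p q)) = dd a (\<lambda>p q. uu (\<lambda>j. F j p q))"
  by (rule pair2_pair_swap[symmetric])
lemma mm_dd:
  "mm a b (\<lambda>w. dd c (\<lambda>p q. F p q w))
    = dd c (\<lambda>p q. mm a b (\<lambda>w. F p q w))"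
  by (rule pair2_pair_swap[symmetric])

lemma pair_hmul: "pair (hmul M x y) G = pair x (\<lambda>i. pair y (\<lambda>j. mm i j G))"
  by (simp add: hmul_eq_pair[abs_def] pair_contract)

section \<open>The antipode is an anti-homomorphism\<close>

lemma mult_assoc3:
  "mm t v (\<lambda>\<beta>. mm s w (\<lambda>\<alpha>. mm \<alpha> \<beta> F))
    = mm w t (\<lambda>\<delta>. mm \<delta> v (\<lambda>\<gamma>. mm s \<gamma> F))"
proof -
  have "mm t v (\<lambda>\<beta>. mm s w (\<lambda>\<alpha>. mm \<alpha> \<beta> F))
      = mm t v (\<lambda>\<beta>. mm w \<beta> (\<lambda>\<gamma>. mm s \<gamma> F))"
    by (simp only: mult_assoc)
  also have "\<dots> = mm w t (\<lambda>\<delta>. mm \<delta> v (\<lambda>\<gamma>. mm s \<gamma> F))"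
    by (rule mult_assoc[symmetric])
  finally show ?thesis .
qed

lemma mult_assoc_antipode_swap:
  "ss r (\<lambda>v. mm p q (\<lambda>w. mm w t (\<lambda>\<delta>. G \<delta> v)))
    = mm q t (\<lambda>\<eta>. ss r (\<lambda>v. mm p \<eta> (\<lambda>\<delta>. G \<delta> v)))"
proof -
  have "ss r (\<lambda>v. mm p q (\<lambda>w. mm w t (\<lambda>\<delta>. G \<delta> v)))
      = ss r (\<lambda>v. mm q t (\<lambda>\<eta>. mm p \<eta> (\<lambda>\<delta>. G \<delta> v)))"
    by (simp only: mult_assoc)
  also have "\<dots> = mm q t (\<lambda>\<eta>. ss r (\<lambda>v. mm p \<eta> (\<lambda>\<delta>. G \<delta> v)))"
    by (rule pair_swap)
  finally show ?thesis .
qed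

text \<open>The convolution product (S \<circ> m) * m * (m \<circ> (S \<otimes> S) \<circ> flip) on H \<otimes> H, evaluated at
  e_a \<otimes> e_b and paired with F.  Bracketing it either way shows S(ab) = S(b) S(a).\<close>

definition antimult_triple :: "'i \<Rightarrow> 'i \<Rightarrow> 'i vec \<Rightarrow> complex" where
  "antimult_triple a b F = dd a (\<lambda>x1 a'. dd a' (\<lambda>x2 x3. dd b (\<lambda>y1 b'. dd b' (\<lambda>y2 y3.
      mm x1 y1 (\<lambda>z. ss z (\<lambda>\<sigma>. mm x2 y2 (\<lambda>w. mm \<sigma> w (\<lambda>\<alpha>.
        ss y3 (\<lambda>t. ss x3 (\<lambda>v. mm t v (\<lambda>\<beta>. mm \<alpha> \<beta> F)))))))))))"

lemma antimult_triple_eq_antipode_mult: "antimult_triple a b F = mm a b (\<lambda>z. ss z F)"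
proof -
  have "antimult_triple a b F
      = dd a (\<lambda>x1 a'. dd a' (\<lambda>x2 x3. dd b (\<lambda>y1 b'. dd b' (\<lambda>y2 y3.
      mm x1 y1 (\<lambda>z. ss z (\<lambda>\<sigma>. mm x2 y2 (\<lambda>w. ss y3 (\<lambda>t. ss x3 (\<lambda>v. mm t v (\<lambda>\<beta>. mm \<sigma> w (\<lambda>\<alpha>. mm \<alpha> \<beta> F)))))))))))"
    unfolding antimult_triple_def apply (simp only: mm_ss) apply (subst mm_mm) by (rule refl)
  also have "\<dots> = dd a (\<lambda>x1 a'. dd a' (\<lambda>x2 x3. dd b (\<lambda>y1 b'. dd b' (\<lambda>y2 y3.
      mm x1 y1 (\<lambda>z. ss z (\<lambda>\<sigma>. ss y3 (\<lambda>t. ss x3 (\<lambda>v. mm x2 y2 (\<lambda>w. mm w t (\<lambda>\<delta>. mm \<delta> v (\<lambda>\<gamma>. mm \<sigma> \<gamma> F)))))))))))"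
    by (simp only: mult_assoc3 mm_ss)
  also have "\<dots> = dd a (\<lambda>x1 a'. dd a' (\<lambda>x2 x3. dd b (\<lambda>y1 b'. dd b' (\<lambda>y2 y3.
      mm x1 y1 (\<lambda>z. ss z (\<lambda>\<sigma>. ss y3 (\<lambda>t. mm y2 t (\<lambda>\<eta>. ss x3 (\<lambda>v. mm x2 \<eta> (\<lambda>\<delta>. mm \<delta> v (\<lambda>\<gamma>. mm \<sigma> \<gamma> F)))))))))))"
    by (simp only: mult_assoc_antipode_swap)
  also have "\<dots> = dd a (\<lambda>x1 a'. dd a' (\<lambda>x2 x3. dd b (\<lambda>y1 b'.
      mm x1 y1 (\<lambda>z. ss z (\<lambda>\<sigma>. dd b' (\<lambda>y2 y3. ss y3 (\<lambda>t. mm y2 t (\<lambda>\<eta>. ss x3 (\<lambda>v. mm x2 \<eta> (\<lambda>\<delta>. mm \<delta> v (\<lambda>\<gamma>. mm \<sigma> \<gamma> F)))))))))))"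
    by (simp only: dd_mm dd_ss)
  also have "\<dots> = dd a (\<lambda>x1 a'. dd a' (\<lambda>x2 x3. dd b (\<lambda>y1 b'.
      mm x1 y1 (\<lambda>z. ss z (\<lambda>\<sigma>. E b' * ss x3 (\<lambda>v. mm x2 v (\<lambda>\<gamma>. mm \<sigma> \<gamma> F)))))))"
    by (simp only: antipode_right uu_ss unit_right)
  also have "\<dots> = dd a (\<lambda>x1 a'. dd a' (\<lambda>x2 x3. mm x1 b (\<lambda>z. ss z (\<lambda>\<sigma>. ss x3 (\<lambda>v. mm x2 v (\<lambda>\<gamma>. mm \<sigma> \<gamma> F))))))"
    by (simp only: pair_cmult counit_right_comm)
  also have "\<dots> = dd a (\<lambda>x1 a'. mm x1 b (\<lambda>z. ss z (\<lambda>\<sigma>. dd a' (\<lambda>x2 x3. ss x3 (\<lambda>v. mm x2 v (\<lambda>\<gamma>. mm \<sigma> \<gamma> F))))))"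
    by (simp only: dd_mm dd_ss)
  also have "\<dots> = mm a b (\<lambda>z. ss z F)"
    by (simp only: antipode_right unit_right pair_cmult counit_right_comm)
  finally show ?thesis .
qed

lemma antimult_triple_eq_mult_antipodes:
  "antimult_triple a b F = ss b (\<lambda>p. ss a (\<lambda>q. mm p q F))"
proof -
  have "antimult_triple a b F
      = dd a (\<lambda>a'' x3. dd a'' (\<lambda>x1 x2. dd b (\<lambda>b'' y3. dd b'' (\<lambda>y1 y2.
      mm x1 y1 (\<lambda>z. ss z (\<lambda>\<sigma>. mm x2 y2 (\<lambda>w. mm \<sigma> w (\<lambda>\<alpha>. ss y3 (\<lambda>t. ss x3 (\<lambda>v. mm t v (\<lambda>\<beta>. mm \<alpha> \<beta> F)))))))))))"
    unfolding antimult_triple_def by (simp only: coassoc[symmetric])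
  also have "\<dots> = dd a (\<lambda>a'' x3. dd b (\<lambda>b'' y3. dd a'' (\<lambda>x1 x2. dd b'' (\<lambda>y1 y2.
      mm x1 y1 (\<lambda>z. mm x2 y2 (\<lambda>w. ss z (\<lambda>\<sigma>. mm \<sigma> w (\<lambda>\<alpha>. ss y3 (\<lambda>t. ss x3 (\<lambda>v. mm t v (\<lambda>\<beta>. mm \<alpha> \<beta> F)))))))))))"
    apply (subst dd_dd) by (simp only: ss_mm)
  also have "\<dots> = dd a (\<lambda>a'' x3. dd b (\<lambda>b'' y3. E a'' * E b'' *
       uu (\<lambda>\<alpha>. ss y3 (\<lambda>t. ss x3 (\<lambda>v. mm t v (\<lambda>\<beta>. mm \<alpha> \<beta> F))))))"
    by (simp only: comult_mult[symmetric] antipode_left pair_multc counit_mult)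
  also have "\<dots> = uu (\<lambda>\<alpha>. ss b (\<lambda>t. ss a (\<lambda>v. mm t v (\<lambda>\<beta>. mm \<alpha> \<beta> F))))"
    by (simp only: mult.assoc pair2_cmult counit_left)
  also have "\<dots> = ss b (\<lambda>p. ss a (\<lambda>q. mm p q F))"
    by (simp only: uu_ss uu_mm unit_left)
  finally show ?thesis .
qed

lemma antipode_antimult: "mm a b (\<lambda>k. ss k F) = ss b (\<lambda>p. ss a (\<lambda>q. mm p q F))"
  using antimult_triple_eq_antipode_mult antimult_triple_eq_mult_antipodes by simp
lemma mult_assoc_interchange:
  "mm a1 b1 (\<lambda>p1. mm a2 b2 (\<lambda>p2. mm p1 c (\<lambda>q1. mm p2 d (\<lambda>q2. G q1 q2))))
         = mm b1 c (\<lambda>e. mm b2 d (\<lambda>f. mm a1 e (\<lambda>q1. mm a2 f (\<lambda>q2. G q1 q2))))"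
proof -
  have "mm a1 b1 (\<lambda>p1. mm a2 b2 (\<lambda>p2. mm p1 c (\<lambda>q1. mm p2 d (\<lambda>q2. G q1 q2))))
      = mm a1 b1 (\<lambda>p1. mm p1 c (\<lambda>q1. mm a2 b2 (\<lambda>p2. mm p2 d (\<lambda>q2. G q1 q2))))"
    by (rule arg_cong[where f="mm a1 b1"], rule ext, rule pair_swap)
  also have "\<dots> = mm b1 c (\<lambda>e. mm a1 e (\<lambda>q1. mm b2 d (\<lambda>f. mm a2 f (\<lambda>q2. G q1 q2))))"
    by (simp only: mult_assoc)
  also have "\<dots> = mm b1 c (\<lambda>e. mm b2 d (\<lambda>f. mm a1 e (\<lambda>q1. mm a2 f (\<lambda>q2. G q1 q2))))"
    by (rule arg_cong[where f="mm b1 c"], rule ext, rule pair_swap)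
  finally show ?thesis .
qed

text \<open>The convolution product (\<Delta> \<circ> S) * \<Delta> * ((S \<otimes> S) \<circ> flip \<circ> \<Delta>) on H, evaluated at e_a and
  paired with G.  Bracketing it either way shows \<Delta>(S a) = (S \<otimes> S)(flip (\<Delta> a)).\<close>

definition anticomult_triple :: "'i \<Rightarrow> ('i \<Rightarrow> 'i \<Rightarrow> complex) \<Rightarrow> complex" where
  "anticomult_triple a G = dd a (\<lambda>t x4. dd t (\<lambda>s x3. dd s (\<lambda>x1 x2.
      ss x1 (\<lambda>k. dd k (\<lambda>a1 a2. dd x2 (\<lambda>b1 b2. mm a1 b1 (\<lambda>p1. mm a2 b2 (\<lambda>p2.
         ss x4 (\<lambda>c. ss x3 (\<lambda>d. mm p1 c (\<lambda>q1. mm p2 d (\<lambda>q2. G q1 q2))))))))))))"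

lemma anticomult_triple_eq_antipodes_comult:
  "anticomult_triple a G = dd a (\<lambda>p q. ss q (\<lambda>x. ss p (\<lambda>y. G x y)))"
proof -
  have "anticomult_triple a G
      = dd a (\<lambda>t x4. dd t (\<lambda>s x3. E s * ss x4 (\<lambda>c. ss x3 (\<lambda>d. G c d))))"
    unfolding anticomult_triple_def by (simp only: comult_mult[symmetric] antipode_left comult_unit uu_ss uu_mm unit_left)
  also have "\<dots> = dd a (\<lambda>p q. ss q (\<lambda>x. ss p (\<lambda>y. G x y)))"
    by (simp only: counit_left)
  finally show ?thesis .
qed

lemma antipode_comult_inner:
  "dd s' (\<lambda>b2 x3. dd u (\<lambda>x1 b1.
      ss x1 (\<lambda>k. dd k (\<lambda>a1 a2. ss x4 (\<lambda>c. ss x3 (\<lambda>d.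
        mm b1 c (\<lambda>e. mm b2 d (\<lambda>f. mm a1 e (\<lambda>q1. mm a2 f (\<lambda>q2. G q1 q2))))))))))
    = E s' * dd u (\<lambda>x1 b1.
      ss x1 (\<lambda>k. dd k (\<lambda>a1 a2. ss x4 (\<lambda>c. mm b1 c (\<lambda>e. mm a1 e (\<lambda>q1. G q1 a2))))))"
proof -
  have "dd s' (\<lambda>b2 x3. dd u (\<lambda>x1 b1.
    ss x1 (\<lambda>k. dd k (\<lambda>a1 a2. ss x4 (\<lambda>c. ss x3 (\<lambda>d.
      mm b1 c (\<lambda>e. mm b2 d (\<lambda>f. mm a1 e (\<lambda>q1. mm a2 f (\<lambda>q2. G q1 q2))))))))))
    = dd s' (\<lambda>b2 x3. dd u (\<lambda>x1 b1.
    ss x1 (\<lambda>k. dd k (\<lambda>a1 a2. ss x4 (\<lambda>c. mm b1 c (\<lambda>e. ss x3 (\<lambda>d.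
      mm b2 d (\<lambda>f. mm a1 e (\<lambda>q1. mm a2 f (\<lambda>q2. G q1 q2))))))))))"
    by (simp only: ss_mm)
  also have "\<dots> = dd u (\<lambda>x1 b1.
    ss x1 (\<lambda>k. dd k (\<lambda>a1 a2. ss x4 (\<lambda>c. mm b1 c (\<lambda>e. dd s' (\<lambda>b2 x3. ss x3 (\<lambda>d.
      mm b2 d (\<lambda>f. mm a1 e (\<lambda>q1. mm a2 f (\<lambda>q2. G q1 q2))))))))))"
    apply (subst dd_dd) apply (simp only: dd_ss dd_mm) apply (subst dd_dd) by (simp only: dd_ss dd_mm)
  also have "\<dots> = E s' * dd u (\<lambda>x1 b1.
    ss x1 (\<lambda>k. dd k (\<lambda>a1 a2. ss x4 (\<lambda>c. mm b1 c (\<lambda>e. mm a1 e (\<lambda>q1. G q1 a2))))))"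
    by (simp only: antipode_right uu_mm unit_right pair_cmult pair2_cmult)
  finally show ?thesis .
qed

lemma anticomult_triple_eq_comult_antipode: "anticomult_triple a G = ss a (\<lambda>k. dd k G)"
proof -
  have "anticomult_triple a G = dd a (\<lambda>t x4. dd t (\<lambda>s x3. dd s (\<lambda>x1 x2.
      ss x1 (\<lambda>k. dd k (\<lambda>a1 a2. dd x2 (\<lambda>b1 b2. ss x4 (\<lambda>c. ss x3 (\<lambda>d.
        mm b1 c (\<lambda>e. mm b2 d (\<lambda>f. mm a1 e (\<lambda>q1. mm a2 f (\<lambda>q2. G q1 q2))))))))))))"
    unfolding anticomult_triple_def by (simp only: mm_ss mult_assoc_interchange)
  also have "\<dots> = dd a (\<lambda>t x4. dd t (\<lambda>s x3. dd s (\<lambda>x1 x2. dd x2 (\<lambda>b1 b2.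
      ss x1 (\<lambda>k. dd k (\<lambda>a1 a2. ss x4 (\<lambda>c. ss x3 (\<lambda>d.
        mm b1 c (\<lambda>e. mm b2 d (\<lambda>f. mm a1 e (\<lambda>q1. mm a2 f (\<lambda>q2. G q1 q2))))))))))))"
    apply (subst dd_dd) by (simp only: ss_dd)
  also have "\<dots> = dd a (\<lambda>t x4. dd t (\<lambda>s x3. dd s (\<lambda>u b2. dd u (\<lambda>x1 b1.
      ss x1 (\<lambda>k. dd k (\<lambda>a1 a2. ss x4 (\<lambda>c. ss x3 (\<lambda>d.
        mm b1 c (\<lambda>e. mm b2 d (\<lambda>f. mm a1 e (\<lambda>q1. mm a2 f (\<lambda>q2. G q1 q2))))))))))))"
    by (simp only: coassoc[symmetric])
  also have "\<dots> = dd a (\<lambda>t x4. dd t (\<lambda>u s'. dd s' (\<lambda>b2 x3. dd u (\<lambda>x1 b1.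
      ss x1 (\<lambda>k. dd k (\<lambda>a1 a2. ss x4 (\<lambda>c. ss x3 (\<lambda>d.
        mm b1 c (\<lambda>e. mm b2 d (\<lambda>f. mm a1 e (\<lambda>q1. mm a2 f (\<lambda>q2. G q1 q2))))))))))))"
    by (rule arg_cong[where f="dd a"], rule ext, rule ext, rule coassoc)
  also have "\<dots> = dd a (\<lambda>t x4. dd t (\<lambda>u s'. E s' * dd u (\<lambda>x1 b1.
      ss x1 (\<lambda>k. dd k (\<lambda>a1 a2. ss x4 (\<lambda>c. mm b1 c (\<lambda>e. mm a1 e (\<lambda>q1. G q1 a2))))))))"
    by (simp only: antipode_comult_inner)
  also have "\<dots> = dd a (\<lambda>t x4. dd t (\<lambda>x1 b1.
      ss x1 (\<lambda>k. dd k (\<lambda>a1 a2. ss x4 (\<lambda>c. mm b1 c (\<lambda>e. mm a1 e (\<lambda>q1. G q1 a2)))))))"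
    by (simp only: counit_right_comm)
  also have "\<dots> = dd a (\<lambda>x1 s. dd s (\<lambda>b1 x4.
      ss x1 (\<lambda>k. dd k (\<lambda>a1 a2. ss x4 (\<lambda>c. mm b1 c (\<lambda>e. mm a1 e (\<lambda>q1. G q1 a2)))))))"
    by (rule coassoc)
  also have "\<dots> = dd a (\<lambda>x1 s. ss x1 (\<lambda>k. dd s (\<lambda>b1 x4. ss x4 (\<lambda>c. mm b1 c (\<lambda>e. dd k (\<lambda>a1 a2. mm a1 e (\<lambda>q1. G q1 a2)))))))"
    by (simp only: dd_ss dd_mm)
  also have "\<dots> = dd a (\<lambda>x1 s. E s * ss x1 (\<lambda>k. dd k (\<lambda>a1 a2. G a1 a2)))"
    by (simp only: antipode_right uu_dd unit_right pair_cmult pair2_cmult)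
  also have "\<dots> = ss a (\<lambda>k. dd k G)"
    by (simp only: counit_right_comm)
  finally show ?thesis .
qed

lemma antipode_anticomult:
  "ss a (\<lambda>k. dd k G) = dd a (\<lambda>p q. ss q (\<lambda>x. ss p (\<lambda>y. G x y)))"
  using anticomult_triple_eq_comult_antipode anticomult_triple_eq_antipodes_comult by simp

lemma antipode_unit: "uu (\<lambda>p. ss p F) = uu F"
proof -
  have "uu (\<lambda>p. ss p F) = uu (\<lambda>a. dd a (\<lambda>p q. ss p (\<lambda>r. mm r q F)))"
    by (simp only: comult_unit uu_ss unit_right)
  also have "\<dots> = uu F"
    by (simp add: antipode_left counit_unit)
  finally show ?thesis .
qed

lemma counit_antipode: "ss p E = E p"
proof -
  have "dd p (\<lambda>a b. ss a (\<lambda>r. mm r b E)) = E p * uu E" by (rule antipode_left)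
  then show ?thesis by (simp add: counit_mult counit_unit counit_right)
qed

section \<open>A nonzero integral of H*, and bijectivity of the antipode\<close>

lemma comult_antipode_exchange:
  "dd x (\<lambda>p q. f p * ss b (\<lambda>s. mm q s m))
    = dd b (\<lambda>b1 b2. ss b1 (\<lambda>s. mm x s (\<lambda>y. dd y (\<lambda>p q. mm p b2 f * m q))))"
proof -
  have "dd b (\<lambda>b1 b2. ss b1 (\<lambda>s. mm x s (\<lambda>y. dd y (\<lambda>p q. mm p b2 f * m q))))
      = dd b (\<lambda>b1 b2. ss b1 (\<lambda>s. dd x (\<lambda>x1 x2. dd s (\<lambda>s1 s2. mm x1 s1 (\<lambda>p. mm x2 s2 (\<lambda>q. mm p b2 f * m q))))))"
    by (simp only: comult_mult)
  also have "\<dots> = dd x (\<lambda>x1 x2. dd b (\<lambda>b1 b2. ss b1 (\<lambda>s. dd s (\<lambda>s1 s2. mm x1 s1 (\<lambda>p. mm x2 s2 (\<lambda>q. mm p b2 f * m q))))))"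
    apply (simp only: ss_dd) apply (subst dd_dd) by (rule refl)
  also have "\<dots> = dd x (\<lambda>x1 x2. dd b (\<lambda>b1 b2. dd b1 (\<lambda>c d. ss d (\<lambda>s1. ss c (\<lambda>s2. mm x1 s1 (\<lambda>p. mm x2 s2 (\<lambda>q. mm p b2 f * m q)))))))"
    by (simp only: antipode_anticomult)
  also have "\<dots> = dd x (\<lambda>x1 x2. dd b (\<lambda>c t. dd t (\<lambda>d b2. ss d (\<lambda>s1. ss c (\<lambda>s2. mm x1 s1 (\<lambda>p. mm x2 s2 (\<lambda>q. mm p b2 f * m q)))))))"
    by (simp only: coassoc)
  also have "\<dots> = dd x (\<lambda>x1 x2. dd b (\<lambda>c t. dd t (\<lambda>d b2. ss d (\<lambda>s1. mm s1 b2 (\<lambda>r. mm x1 r f)) * ss c (\<lambda>s2. mm x2 s2 m))))"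
    by (simp only: pair_cmult pair_multc mult_assoc)
  also have "\<dots> = dd x (\<lambda>x1 x2. dd b (\<lambda>c t. E t * (f x1 * ss c (\<lambda>s2. mm x2 s2 m))))"
    by (simp only: pair2_multc antipode_left unit_right mult.assoc)
  also have "\<dots> = dd x (\<lambda>p q. f p * ss b (\<lambda>s. mm q s m))"
    by (simp only: counit_right_comm)
  finally show ?thesis by (rule sym)
qed

definition left_integral :: "'i vec \<Rightarrow> bool" where
  "left_integral l \<longleftrightarrow> (\<forall>y G. dd y (\<lambda>p q. G p * l q) = uu G * l y)"

lemma left_integral_exchange:
  assumes "left_integral l"
  shows "dd x (\<lambda>p q. f p * ss b (\<lambda>s. mm q s l))
      = dd b (\<lambda>b1 b2. f b2 * ss b1 (\<lambda>s. mm x s l))"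
proof -
  have integral: "dd y (\<lambda>p q. G p * l q) = uu G * l y" for y G
    using assms unfolding left_integral_def by blast
  show ?thesis
    unfolding comult_antipode_exchange integral unit_left by (simp only: pair_cmult)
qed

lemma sum_dd:
  "(\<Sum>j\<in>A. dd c (\<lambda>p q. F j p q)) = dd c (\<lambda>p q. \<Sum>j\<in>A. F j p q)"
  by (rule pair2_sum[symmetric])

lemma sum_bas_index: "(\<Sum>j\<in>(UNIV::'i set). bas j d * F j) = (F d :: complex)"
  by (subst bas_commute) (rule sum_bas_left)

lemma pair2_pull_out:
  "dd w (\<lambda>p q. A p * dd b (\<lambda>b1 b2. B b2 * F b1 q))
    = dd b (\<lambda>b1 b2. B b2 * dd w (\<lambda>p q. A p * F b1 q))"
proof -
  have "dd w (\<lambda>p q. A p * dd b (\<lambda>b1 b2. B b2 * F b1 q))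
      = dd w (\<lambda>p q. dd b (\<lambda>b1 b2. A p * (B b2 * F b1 q)))"
    by (simp only: pair2_cmult)
  also have "\<dots> = dd b (\<lambda>b1 b2. dd w (\<lambda>p q. A p * (B b2 * F b1 q)))"
    by (rule pair2_swap)
  also have "\<dots> = dd b (\<lambda>b1 b2. B b2 * dd w (\<lambda>p q. A p * F b1 q))"
  proof -
    have e: "\<And>p q b1 b2. A p * (B b2 * F b1 q) = B b2 * (A p * F b1 q)" by (simp add: mult_ac)
    show ?thesis by (simp only: e pair2_cmult)
  qed
  finally show ?thesis .
qed

lemma antipode_antimult_assoc:
  "ss d (\<lambda>b'. ss b' (\<lambda>s. mm y s (\<lambda>w. ss c (\<lambda>t. mm w t l))))
    = ss d (\<lambda>r. mm c r (\<lambda>v. ss v (\<lambda>t. mm y t l)))"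
proof -
  have "ss d (\<lambda>b'. ss b' (\<lambda>s. mm y s (\<lambda>w. ss c (\<lambda>t. mm w t l))))
      = ss d (\<lambda>b'. ss b' (\<lambda>s. ss c (\<lambda>t. mm y s (\<lambda>w. mm w t l))))"
    by (simp only: mm_ss)
  also have "\<dots> = ss d (\<lambda>b'. ss b' (\<lambda>s. ss c (\<lambda>t. mm s t (\<lambda>w. mm y w l))))"
    by (simp only: mult_assoc)
  also have "\<dots> = ss d (\<lambda>r. mm c r (\<lambda>v. ss v (\<lambda>t. mm y t l)))"
    by (simp only: antipode_antimult)
  finally show ?thesis .
qed

lemma left_integral_antipode_bas:
  assumes "left_integral l"
  shows "(\<Sum>j\<in>UNIV. ss j (\<lambda>b'. ss b' (\<lambda>s. mm y s (\<lambda>w. dd w (\<lambda>p q. bas j p * dd q (\<lambda>p' q'. bas z p' * ss b (\<lambda>t. mm q' t l)))))))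
     = bas z b * l y"
proof -
  have "(\<Sum>j\<in>UNIV. ss j (\<lambda>b'. ss b' (\<lambda>s. mm y s (\<lambda>w. dd w (\<lambda>p q. bas j p * dd q (\<lambda>p' q'. bas z p' * ss b (\<lambda>t. mm q' t l)))))))
     = (\<Sum>j\<in>UNIV. ss j (\<lambda>b'. ss b' (\<lambda>s. mm y s (\<lambda>w. dd b (\<lambda>b1 b2. bas z b2 * dd b1 (\<lambda>c d. bas j d * ss c (\<lambda>t. mm w t l)))))))"
    by (simp only: left_integral_exchange[OF assms] pair2_pull_out)
  also have "\<dots> = dd b (\<lambda>b1 b2. bas z b2 * dd b1 (\<lambda>c d. ss d (\<lambda>b'. ss b' (\<lambda>s. mm y s (\<lambda>w. ss c (\<lambda>t. mm w t l))))))"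
    by (simp only: mm_dd ss_dd sum_dd pair_cmult sum_distrib_left[symmetric] sum_bas_index)
  also have "\<dots> = dd b (\<lambda>b1 b2. E b1 * (bas z b2 * l y))"
    by (simp only: antipode_antimult_assoc antipode_right antipode_unit unit_right mult.left_commute[of "bas z _"])
  also have "\<dots> = bas z b * l y"
    by (simp only: counit_left)
  finally show ?thesis .
qed

lemma left_integral_antipode_kernel:
  assumes "left_integral l" and "\<And>q. pair h (\<lambda>b. ss b (\<lambda>t. mm q t l)) = 0"
  shows "h z * l y = 0"
proof -
  define T where "T \<Phi> = (\<Sum>j\<in>UNIV. ss j (\<lambda>b'. ss b' (\<lambda>s. mm y s (\<lambda>w. dd w (\<lambda>p q. bas j p * dd q (\<lambda>p' q'. bas z p' * \<Phi> q'))))))" for \<Phi>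
  have "T (\<lambda>q'. pair h (\<lambda>b. ss b (\<lambda>t. mm q' t l)))
      = (\<Sum>j\<in>UNIV. \<Sum>b\<in>UNIV. h b * ss j (\<lambda>b'. ss b' (\<lambda>s. mm y s (\<lambda>w. dd w (\<lambda>p q. bas j p * dd q (\<lambda>p' q'. bas z p' * ss b (\<lambda>t. mm q' t l)))))))"
  proof -
    have e: "\<And>a b c. (a::complex) * (h b * c) = h b * (a * c)" by (simp add: mult_ac)
    show ?thesis unfolding T_def pair_def[of h] by (simp only: pair_sum pair2_sum pair_cmult pair2_cmult sum_distrib_left e)
  qed
  also have "\<dots> = (\<Sum>b\<in>UNIV. h b * (\<Sum>j\<in>UNIV. ss j (\<lambda>b'. ss b' (\<lambda>s. mm y s (\<lambda>w. dd w (\<lambda>p q. bas j p * dd q (\<lambda>p' q'. bas z p' * ss b (\<lambda>t. mm q' t l))))))))"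
    by (subst sum.swap) (simp only: sum_distrib_left)
  also have "\<dots> = (\<Sum>b\<in>UNIV. h b * (bas z b * l y))"
    by (simp only: left_integral_antipode_bas[OF assms(1)])
  also have "\<dots> = h z * l y"
    by (simp add: bas_def if_distrib[of "\<lambda>x. x * _"] if_distrib[of "\<lambda>x. _ * x"] cong: if_cong)
  finally have 1: "T (\<lambda>q'. pair h (\<lambda>b. ss b (\<lambda>t. mm q' t l))) = h z * l y" .
  have "T (\<lambda>q'. pair h (\<lambda>b. ss b (\<lambda>t. mm q' t l))) = T (\<lambda>q'. 0)"
    using assms(2) by simp
  also have "\<dots> = 0" unfolding T_def by simp
  finally show ?thesis using 1 by simp
qed

lemma conv_assoc_pair:
  "dd v (\<lambda>p q. f p * dd q (\<lambda>a b. g a * m b))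
    = dd v (\<lambda>p q. dd p (\<lambda>a b. f a * g b) * m q)"
proof -
  have "dd v (\<lambda>p q. dd p (\<lambda>a b. f a * g b) * m q)
      = dd v (\<lambda>p q. dd p (\<lambda>a b. f a * g b * m q))"
    by (simp only: pair2_multc)
  also have "\<dots> = dd v (\<lambda>p t. dd t (\<lambda>a b. f p * g a * m b))"
    by (rule coassoc)
  also have "\<dots> = dd v (\<lambda>p q. f p * dd q (\<lambda>a b. g a * m b))"
    by (simp only: mult.assoc pair2_cmult)
  finally show ?thesis by (rule sym)
qed

text \<open>P(m)(w) = \<Sum>_k (f^k * m)(e_w S(S(e_k))), with f^k the dual basis and * convolution.
  Every P(m) is a left integral, and m can be rebuilt from the P(f^j * m), so not all left
  integrals vanish.\<close>

definition integral_proj :: "'i vec \<Rightarrow> 'i vec" where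
  "integral_proj m = (\<lambda>w. \<Sum>k\<in>UNIV. ss k (\<lambda>b. ss b (\<lambda>s. mm w s (\<lambda>v. dd v (\<lambda>p q. bas k p * m q)))))"

lemma integral_proj_comult_counit:
  "(\<Sum>k\<in>UNIV. dd k (\<lambda>c d. ss c (\<lambda>b2. dd p' (\<lambda>a b. mm a b2 G * bas k b)) * B d))
    = uu G * B p'"
proof -
  have "(\<Sum>k\<in>UNIV. dd k (\<lambda>c d. ss c (\<lambda>b2. dd p' (\<lambda>a b. mm a b2 G * bas k b)) * B d))
      = (\<Sum>k\<in>UNIV. dd k (\<lambda>c d. dd p' (\<lambda>a b. ss c (\<lambda>b2. mm a b2 G) * bas k b * B d)))"
    by (simp only: ss_dd pair_multc pair2_multc[symmetric])
  also have "\<dots> = (\<Sum>k\<in>UNIV. dd p' (\<lambda>a b. dd k (\<lambda>c d. ss c (\<lambda>b2. mm a b2 G) * bas k b * B d)))"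
    by (subst dd_dd) (rule refl)
  also have "\<dots> = (\<Sum>k\<in>UNIV. dd p' (\<lambda>a b. bas k b * dd k (\<lambda>c d. ss c (\<lambda>b2. mm a b2 G) * B d)))"
  proof -
    have e: "\<And>x y z. (x::complex) * bas k b * z = bas k b * (x * z)" for k b by (simp add: mult_ac)
    show ?thesis by (simp only: e pair2_cmult)
  qed
  also have "\<dots> = dd p' (\<lambda>a b. dd b (\<lambda>c d. ss c (\<lambda>b2. mm a b2 G) * B d))"
    by (simp only: sum_dd sum_bas_index)
  also have "\<dots> = dd p' (\<lambda>t d. dd t (\<lambda>a c. ss c (\<lambda>b2. mm a b2 G) * B d))"
    by (simp only: coassoc)
  also have "\<dots> = dd p' (\<lambda>t d. E t * (uu G * B d))"
    by (simp only: pair2_multc antipode_right mult.assoc)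
  also have "\<dots> = uu G * B p'"
    by (simp only: counit_left)
  finally show ?thesis .
qed

lemma dd_mult_ss:
  "dd y (\<lambda>p q. G p * ss k (\<lambda>b. F b q))
    = ss k (\<lambda>b. dd y (\<lambda>p q. G p * F b q))"
proof -
  have "dd y (\<lambda>p q. G p * ss k (\<lambda>b. F b q))
      = dd y (\<lambda>p q. ss k (\<lambda>b. G p * F b q))"
    by simp
  also have "\<dots> = ss k (\<lambda>b. dd y (\<lambda>p q. G p * F b q))" by (rule pair2_pair_swap)
  finally show ?thesis .
qed

lemma pair2_expand_conv:
  "dd v (\<lambda>p q. dd p (\<lambda>a b. F a * bas k b) * m q)
    = (\<Sum>p'\<in>UNIV. dd p' (\<lambda>a b. F a * bas k b) * dd v (\<lambda>p q. bas p' p * m q))"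
  by (rule pair2_expand_left)

lemma left_integral_integral_proj: "left_integral (integral_proj m)"
  unfolding left_integral_def
proof (intro allI)
  fix y G
  define \<Psi> where "\<Psi> p' v = dd v (\<lambda>p q. bas p' p * m q)" for p' v
  have "dd y (\<lambda>p q. G p * integral_proj m q)
      = (\<Sum>k\<in>UNIV. dd y (\<lambda>p q. G p * ss k (\<lambda>b. ss b (\<lambda>s. mm q s (\<Psi> k)))))"
    unfolding integral_proj_def \<Psi>_def by (simp only: sum_distrib_left pair2_sum)
  also have "\<dots> = (\<Sum>k\<in>UNIV. ss k (\<lambda>b. dd y (\<lambda>p q. G p * ss b (\<lambda>s. mm q s (\<Psi> k)))))"
    apply (rule sum.cong[OF refl]) apply (subst dd_mult_ss) by (rule refl)
  also have "\<dots> = (\<Sum>k\<in>UNIV. dd k (\<lambda>c d. ss d (\<lambda>b1. ss c (\<lambda>b2. ss b1 (\<lambda>s. mm y s (\<lambda>v. dd v (\<lambda>p q. mm p b2 G * \<Psi> k q)))))))"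
    by (simp only: comult_antipode_exchange antipode_anticomult)
  also have "\<dots> = (\<Sum>k\<in>UNIV. dd k (\<lambda>c d. ss d (\<lambda>b1. ss c (\<lambda>b2. ss b1 (\<lambda>s. mm y s (\<lambda>v. \<Sum>p'\<in>UNIV. dd p' (\<lambda>a b. mm a b2 G * bas k b) * \<Psi> p' v))))))"
    unfolding \<Psi>_def by (simp only: conv_assoc_pair pair2_expand_conv)
  also have "\<dots> = (\<Sum>k\<in>UNIV. dd k (\<lambda>c d. \<Sum>p'\<in>UNIV. ss c (\<lambda>b2. dd p' (\<lambda>a b. mm a b2 G * bas k b)) * ss d (\<lambda>b1. ss b1 (\<lambda>s. mm y s (\<Psi> p')))))"
    by (simp only: pair_sum pair_cmult pair_multc)
  also have "\<dots> = (\<Sum>p'\<in>UNIV. \<Sum>k\<in>UNIV. dd k (\<lambda>c d. ss c (\<lambda>b2. dd p' (\<lambda>a b. mm a b2 G * bas k b)) * ss d (\<lambda>b1. ss b1 (\<lambda>s. mm y s (\<Psi> p')))))"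
    apply (simp only: pair2_sum) by (rule sum.swap)
  also have "\<dots> = (\<Sum>p'\<in>UNIV. uu G * ss p' (\<lambda>b1. ss b1 (\<lambda>s. mm y s (\<Psi> p'))))"
    by (simp only: integral_proj_comult_counit)
  also have "\<dots> = uu G * integral_proj m y"
    unfolding integral_proj_def \<Psi>_def by (simp only: sum_distrib_left)
  finally show "dd y (\<lambda>p q. G p * integral_proj m q) = uu G * integral_proj m y" .
qed

lemma pair2_expand_comult:
  "dd v (\<lambda>p q. C p k j * m q)
    = (\<Sum>p'\<in>UNIV. C p' k j * dd v (\<lambda>p q. bas p' p * m q))"
  by (rule pair2_expand_left)

lemma antipode_antimult_assoc_swap:
  "ss j (\<lambda>s. mm y s (\<lambda>w. ss k (\<lambda>b. ss b (\<lambda>s'. mm w s' \<Psi>))))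
    = ss k (\<lambda>r. mm r j (\<lambda>u. ss u (\<lambda>s. mm y s \<Psi>)))"
proof -
  have "ss k (\<lambda>r. mm r j (\<lambda>u. ss u (\<lambda>s. mm y s \<Psi>)))
      = ss k (\<lambda>r. ss j (\<lambda>p. ss r (\<lambda>q. mm p q (\<lambda>s. mm y s \<Psi>))))"
    by (simp only: antipode_antimult)
  also have "\<dots> = ss k (\<lambda>r. ss j (\<lambda>p. ss r (\<lambda>q. mm y p (\<lambda>t. mm t q \<Psi>))))"
    by (simp only: mult_assoc[symmetric])
  also have "\<dots> = ss j (\<lambda>p. ss k (\<lambda>r. ss r (\<lambda>q. mm y p (\<lambda>t. mm t q \<Psi>))))"
    by (rule pair_swap)
  also have "\<dots> = ss j (\<lambda>s. mm y s (\<lambda>w. ss k (\<lambda>b. ss b (\<lambda>s'. mm w s' \<Psi>))))"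
    by (simp only: ss_mm)
  finally show ?thesis by (rule sym)
qed

lemma integral_proj_sum:
  "(\<Sum>j\<in>UNIV. ss j (\<lambda>s. mm y s (integral_proj (\<lambda>q. dd q (\<lambda>p' q'. bas j p' * m q')))))
      = m y"
proof -
  define \<Psi> where "\<Psi> p' v = dd v (\<lambda>p q. bas p' p * m q)" for p' v
  have "(\<Sum>j\<in>UNIV. ss j (\<lambda>s. mm y s (integral_proj (\<lambda>q. dd q (\<lambda>p' q'. bas j p' * m q')))))
     = (\<Sum>j\<in>UNIV. ss j (\<lambda>s. mm y s (\<lambda>w. \<Sum>k\<in>UNIV. ss k (\<lambda>b. ss b (\<lambda>s'. mm w s' (\<lambda>v. \<Sum>p'\<in>UNIV. C p' k j * \<Psi> p' v))))))"
    unfolding integral_proj_def \<Psi>_def by (simp only: conv_assoc_pair pair2_bas pair2_expand_comult)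
  also have "\<dots> = (\<Sum>j\<in>UNIV. \<Sum>k\<in>UNIV. \<Sum>p'\<in>UNIV. C p' k j * ss j (\<lambda>s. mm y s (\<lambda>w. ss k (\<lambda>b. ss b (\<lambda>s'. mm w s' (\<Psi> p'))))))"
    by (simp only: pair_sum pair_cmult sum_distrib_left)
  also have "\<dots> = (\<Sum>p'\<in>UNIV. dd p' (\<lambda>k j. ss j (\<lambda>s. mm y s (\<lambda>w. ss k (\<lambda>b. ss b (\<lambda>s'. mm w s' (\<Psi> p')))))))"
    apply (subst sum_reverse3) by (simp only: pair2_def)
  also have "\<dots> = (\<Sum>p'\<in>UNIV. E p' * \<Psi> p' y)"
    by (simp only: antipode_antimult_assoc_swap antipode_left antipode_unit unit_right)
  also have "\<dots> = m y"
    unfolding \<Psi>_def by (simp only: pair2_expand_left[of "C y" E m, symmetric] counit_left)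
  finally show ?thesis .
qed

lemma exists_nonzero_left_integral: "\<exists>l y. left_integral l \<and> l y \<noteq> 0"
proof (rule ccontr)
  assume "\<not> ?thesis"
  then have "integral_proj m = (\<lambda>_. 0)" for m
    using left_integral_integral_proj by blast
  then have "E y = 0" for y
    using integral_proj_sum[where y=y and m=E] by simp
  then show False
    using counit_unit by (simp add: pair_def)
qed

lemma pair_lin_antipode: "pair h (\<lambda>b. ss b G) = pair (lin S h) G"
  unfolding pair_contract by (rule pair_cong) (simp add: lin_eq_pair)

lemma antipode_kernel_trivial:
  assumes "lin S h = (\<lambda>_. 0)"
  shows "h = (\<lambda>_. 0)"
proof -
  obtain l y where l: "left_integral l" "l y \<noteq> 0" using exists_nonzero_left_integral by blast
  have "pair h (\<lambda>b. ss b (\<lambda>t. mm q t l)) = 0" for q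
    unfolding pair_lin_antipode assms by (simp add: pair_def)
  then have "h z * l y = 0" for z by (rule left_integral_antipode_kernel[OF l(1)])
  then show ?thesis using l(2) by auto
qed

lemma antipode_inj: "inj (lin S)"
proof (rule injI)
  fix x y
  assume "lin S x = lin S y"
  then have "lin S (\<lambda>i. x i - y i) = (\<lambda>_. 0)"
    by (simp add: lin_diff)
  then have "(\<lambda>i. x i - y i) = (\<lambda>_. 0)"
    by (rule antipode_kernel_trivial)
  then show "x = y"
    by (simp add: fun_eq_iff)
qed

lemma antipode_surj: "surj (lin S)"
  using antipode_inj by (rule surj_lin_if_inj)

lemma Sinv_S[simp]: "Sinv S (lin S x) = x"
  unfolding Sinv_def using antipode_inj by (simp add: inv_f_f)
lemma S_Sinv[simp]: "lin S (Sinv S y) = y"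
  unfolding Sinv_def using antipode_surj by (simp add: surj_f_inv_f)

definition Sv :: "'i \<Rightarrow> 'i vec" where
  "Sv k = Sinv S (bas k)"

abbreviation "tt k G \<equiv> pair (Sv k) G"

lemma Sinv_eq_pair: "Sinv S y = (\<lambda>l. pair y (\<lambda>k. Sv k l))"
proof -
  have "lin S (\<lambda>l. pair y (\<lambda>k. Sv k l)) = y"
  proof
    fix j
    have "lin S (\<lambda>l. pair y (\<lambda>k. Sv k l)) j
        = pair y (\<lambda>k. pair (Sv k) (\<lambda>i. S i j))"
      by (simp add: lin_eq_pair pair_contract)
    also have "\<dots> = pair y (\<lambda>k. lin S (Sv k) j)" by (simp add: lin_eq_pair)
    also have "\<dots> = pair y (\<lambda>k. bas j k)" by (simp add: Sv_def bas_commute)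
    also have "\<dots> = y j" by simp
    finally show "lin S (\<lambda>l. pair y (\<lambda>k. Sv k l)) j = y j" .
  qed
  then have "Sinv S (lin S (\<lambda>l. pair y (\<lambda>k. Sv k l))) = Sinv S y" by simp
  then show ?thesis by simp
qed

lemma pair_Sinv: "pair (Sinv S y) G = pair y (\<lambda>k. tt k G)"
  unfolding Sinv_eq_pair by (simp add: pair_contract)

lemma antipode_Sinv_pair: "ss p (\<lambda>y. tt y G) = G p"
proof -
  have "ss p (\<lambda>y. tt y G) = pair (Sinv S (S p)) G" by (simp add: pair_Sinv)
  also have "\<dots> = pair (Sinv S (lin S (bas p))) G" by (simp add: lin_bas)
  also have "\<dots> = G p" by simp
  finally show ?thesis .
qed

lemma Sinv_antipode_pair: "tt k (\<lambda>y. ss y G) = G k"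
proof -
  have "tt k (\<lambda>y. ss y G) = pair (lin S (Sv k)) G" by (rule pair_lin_antipode)
  also have "\<dots> = G k" by (simp add: Sv_def)
  finally show ?thesis .
qed

lemma counit_Sinv: "tt k E = E k"
proof -
  have "tt k E = tt k (\<lambda>y. ss y E)" by (simp only: counit_antipode)
  then show ?thesis by (simp only: Sinv_antipode_pair)
qed

lemma dual_grouplike_iff:
  "dual_grouplike M U \<beta> \<longleftrightarrow> (\<forall>p q. mm p q \<beta> = \<beta> p * \<beta> q) \<and> uu \<beta> = 1"
proof -
  have "dcomult M \<beta> = tens \<beta> \<beta> \<longleftrightarrow> (\<forall>p q. mm q p \<beta> = \<beta> p * \<beta> q)"
    by (simp add: fun_eq_iff dcomult_def tens_def hmul_bas pair_commute)
  also have "\<dots> \<longleftrightarrow> (\<forall>p q. mm p q \<beta> = \<beta> p * \<beta> q)"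
    by (metis mult.commute)
  finally show ?thesis
    by (simp add: dual_grouplike_def pair_commute)
qed

lemma dual_grouplike_counit: "dual_grouplike M U E"
  unfolding dual_grouplike_iff by (simp add: counit_mult counit_unit)

lemma dual_grouplike_conv:
  assumes "dual_grouplike M U f" "dual_grouplike M U g"
  shows "dual_grouplike M U (conv C f g)"
proof -
  have mf: "mm p q f = f p * f q" for p q using assms(1) unfolding dual_grouplike_iff by blast
  have mg: "mm p q g = g p * g q" for p q using assms(2) unfolding dual_grouplike_iff by blast
  have uf: "uu f = 1" using assms(1) unfolding dual_grouplike_iff by blast
  have ug: "uu g = 1" using assms(2) unfolding dual_grouplike_iff by blast
  have e: "\<And>a1 b1 a2 b2. f a1 * f b1 * (g a2 * g b2) = (f a1 * g a2) * (f b1 * g b2)"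
    by (simp add: mult_ac)
  have "mm a b (conv C f g) = conv C f g a * conv C f g b" for a b
  proof -
    have "mm a b (conv C f g) = mm a b (\<lambda>x. dd x (\<lambda>p q. f p * g q))"
      by (simp only: conv_eq_pair2_fun)
    also have "\<dots> = dd a (\<lambda>a1 a2. dd b (\<lambda>b1 b2. (f a1 * g a2) * (f b1 * g b2)))"
      by (simp only: comult_mult pair_cmult pair_multc mf mg e)
    also have "\<dots> = conv C f g a * conv C f g b"
      by (simp only: pair2_cmult pair2_multc conv_eq_pair2)
    finally show ?thesis .
  qed
  moreover have "uu (conv C f g) = 1"
    by (simp only: conv_eq_pair2_fun comult_unit pair_cmult pair_multc uf ug mult_1_left)
  ultimately show ?thesis unfolding dual_grouplike_iff by blast
qed

lemma conv_Sinv_dual_grouplike: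
  assumes "dual_grouplike M U \<beta>"
  shows "dd h (\<lambda>i k. \<beta> i * tt k \<beta>) = E h"
proof -
  have mb: "mm p q \<beta> = \<beta> p * \<beta> q" for p q
    using assms unfolding dual_grouplike_iff by blast
  have ub: "uu \<beta> = 1" using assms unfolding dual_grouplike_iff by blast
  have "dd h (\<lambda>i k. \<beta> i * tt k \<beta>)
      = tt h (\<lambda>y. ss y (\<lambda>a. dd a (\<lambda>i k. \<beta> i * tt k \<beta>)))"
    by (simp only: Sinv_antipode_pair)
  also have "\<dots> = tt h (\<lambda>y. dd y (\<lambda>p q. ss q (\<lambda>x. ss p (\<lambda>y'. \<beta> x * tt y' \<beta>))))"
    by (simp only: antipode_anticomult)
  also have "\<dots> = tt h (\<lambda>y. dd y (\<lambda>p q. ss q (\<lambda>r. mm p r \<beta>)))"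
  proof -
    have e: "\<And>p q. ss q (\<lambda>r. mm p r \<beta>) = ss q \<beta> * \<beta> p"
      by (simp add: mb mult.commute)
    show ?thesis by (simp only: pair_cmult antipode_Sinv_pair pair_multc e)
  qed
  also have "\<dots> = tt h E" by (simp only: antipode_right ub mult_1_right)
  also have "\<dots> = E h" by (rule counit_Sinv)
  finally show ?thesis .
qed

lemma grouplike_iff:
  "grouplike C E k0 \<longleftrightarrow> (\<forall>p q. pair k0 (\<lambda>k. C k p q) = k0 p * k0 q) \<and> pair k0 E = 1"
  by (simp add: grouplike_def fun_eq_iff comult_eq_pair tens_def pair_commute)

lemma grouplike_one: "grouplike C E U"
  unfolding grouplike_iff by (simp add: comult_unit_coeff counit_unit)

lemma grouplike_comult_pair:
  assumes "grouplike C E k0"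
  shows "pair k0 (\<lambda>k. dd k F) = pair k0 (\<lambda>p. pair k0 (\<lambda>q. F p q))"
proof -
  have c: "pair k0 (\<lambda>k. C k p q) = k0 p * k0 q" for p q
    using assms unfolding grouplike_iff by blast
  have "pair k0 (\<lambda>k. dd k F) = pair2 (\<lambda>p q. pair k0 (\<lambda>k. C k p q)) F"
    by (rule pair_pair2_contract)
  also have "\<dots> = pair2 (\<lambda>p q. k0 p * k0 q) F" by (simp only: c)
  also have "\<dots> = pair k0 (\<lambda>p. pair k0 (\<lambda>q. F p q))" by (simp only: pair2_def pair_def sum_distrib_left mult.assoc)
  finally show ?thesis .
qed

lemma grouplike_hmul:
  assumes "grouplike C E a" "grouplike C E v"
  shows "grouplike C E (hmul M a v)"
proof -
  have aE: "pair a E = 1" using assms(1) unfolding grouplike_iff by blast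
  have vE: "pair v E = 1" using assms(2) unfolding grouplike_iff by blast
  have "pair (hmul M a v) (\<lambda>k. C k p q) = hmul M a v p * hmul M a v q" for p q
  proof -
    have "pair (hmul M a v) (\<lambda>k. C k p q)
        = pair a (\<lambda>i. pair v (\<lambda>j. dd i (\<lambda>i1 i2. dd j (\<lambda>j1 j2. M i1 j1 p * M i2 j2 q))))"
      by (simp only: pair_hmul comult_mult_coeff)
    also have "\<dots> = pair a (\<lambda>i. dd i (\<lambda>i1 i2. pair v (\<lambda>j. dd j (\<lambda>j1 j2. M i1 j1 p * M i2 j2 q))))"
      by (rule arg_cong[where f="pair a"], rule ext, rule pair2_pair_swap[symmetric])
    also have "\<dots> = pair a (\<lambda>i1. pair a (\<lambda>i2. pair v (\<lambda>j1. pair v (\<lambda>j2. M i1 j1 p * M i2 j2 q))))"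
      by (simp only: grouplike_comult_pair[OF assms(1)] grouplike_comult_pair[OF assms(2)])
    also have "\<dots> = hmul M a v p * hmul M a v q"
      by (simp only: pair_cmult pair_multc hmul_eq_pair)
    finally show ?thesis .
  qed
  moreover have "pair (hmul M a v) E = 1"
    by (simp only: pair_hmul counit_mult pair_cmult pair_multc aE vE mult_1_left)
  ultimately show ?thesis unfolding grouplike_iff by blast
qed

lemma vec_eq_pair_bas: "(\<And>j. pair v (bas j) = pair w (bas j)) \<Longrightarrow> v = w"
  by (rule ext) simp

lemma pair_swap_inside:
  "pair x (\<lambda>i. ss (f i) (\<lambda>p. pair y (\<lambda>j. F i p j)))
    = pair x (\<lambda>i. pair y (\<lambda>j. ss (f i) (\<lambda>p. F i p j)))"
  by (rule arg_cong[where f="pair x"], rule ext, rule pair_swap)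

lemma antipode_hmul: "lin S (hmul M x y) = hmul M (lin S y) (lin S x)"
proof (rule vec_eq_pair_bas)
  fix j
  have "pair (lin S (hmul M x y)) (bas j) = pair (hmul M x y) (\<lambda>k. ss k (bas j))"
    by (simp only: pair_lin_antipode)
  also have "\<dots> = pair x (\<lambda>a. pair y (\<lambda>b. ss b (\<lambda>p. ss a (\<lambda>q. mm p q (bas j)))))" by (simp only: pair_hmul antipode_antimult)
  also have "\<dots> = pair y (\<lambda>b. pair x (\<lambda>a. ss b (\<lambda>p. ss a (\<lambda>q. mm p q (bas j)))))" by (rule pair_swap)
  also have "\<dots> = pair y (\<lambda>b. ss b (\<lambda>p. pair x (\<lambda>a. ss a (\<lambda>q. mm p q (bas j)))))"
    by (rule arg_cong[where f="pair y"], rule ext, rule pair_swap)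
  also have "\<dots> = pair (hmul M (lin S y) (lin S x)) (bas j)" by (simp only: pair_hmul pair_lin_antipode)
  finally show "pair (lin S (hmul M x y)) (bas j) = pair (hmul M (lin S y) (lin S x)) (bas j)" .
qed

lemma antipode_one: "lin S U = U"
proof (rule vec_eq_pair_bas)
  fix j show "pair (lin S U) (bas j) = pair U (bas j)" by (simp only: pair_lin_antipode[symmetric] antipode_unit)
qed

lemma grouplike_antipode_left:
  assumes "grouplike C E k0"
  shows "hmul M (lin S k0) k0 = U"
proof (rule vec_eq_pair_bas)
  fix l
  have e: "pair k0 E = 1" using assms unfolding grouplike_iff by blast
  have "pair (hmul M (lin S k0) k0) (bas l)
      = pair k0 (\<lambda>i. ss i (\<lambda>p. pair k0 (\<lambda>j. mm p j (bas l))))"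
    by (simp only: pair_hmul pair_lin_antipode)
  also have "\<dots> = pair k0 (\<lambda>i. pair k0 (\<lambda>j. ss i (\<lambda>p. mm p j (bas l))))" by (rule pair_swap_inside)
  also have "\<dots> = pair k0 (\<lambda>k. dd k (\<lambda>i j. ss i (\<lambda>p. mm p j (bas l))))" by (simp only: grouplike_comult_pair[OF assms])
  also have "\<dots> = pair U (bas l)" by (simp only: antipode_left pair_multc e mult_1_left)
  finally show "pair (hmul M (lin S k0) k0) (bas l) = pair U (bas l)" .
qed

lemma grouplike_antipode_right:
  assumes "grouplike C E k0"
  shows "hmul M k0 (lin S k0) = U"
proof (rule vec_eq_pair_bas)
  fix l
  have e: "pair k0 E = 1" using assms unfolding grouplike_iff by blast
  have "pair (hmul M k0 (lin S k0)) (bas l)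
      = pair k0 (\<lambda>i. pair k0 (\<lambda>j. ss j (\<lambda>p. mm i p (bas l))))"
    by (simp only: pair_hmul pair_lin_antipode)
  also have "\<dots> = pair k0 (\<lambda>k. dd k (\<lambda>i j. ss j (\<lambda>p. mm i p (bas l))))" by (simp only: grouplike_comult_pair[OF assms])
  also have "\<dots> = pair U (bas l)" by (simp only: antipode_right pair_multc e mult_1_left)
  finally show "pair (hmul M k0 (lin S k0)) (bas l) = pair U (bas l)" .
qed

lemma Sinv_grouplike_left:
  assumes "grouplike C E k0"
  shows "hmul M (Sinv S k0) k0 = U"
proof -
  define k1 where "k1 = lin S k0"
  have a1: "hmul M k1 k0 = U" unfolding k1_def by (rule grouplike_antipode_left[OF assms])
  have a2: "hmul M k0 k1 = U" unfolding k1_def by (rule grouplike_antipode_right[OF assms])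
  have b: "hmul M (lin S k1) k1 = U"
    using arg_cong[OF a2, of "lin S"] by (simp add: antipode_hmul antipode_one k1_def)
  have "lin S k1 = hmul M (lin S k1) (hmul M k1 k0)" by (simp add: a1 hmul_unit_right)
  also have "\<dots> = hmul M (hmul M (lin S k1) k1) k0" by (simp add: hmul_assoc)
  also have "\<dots> = k0" by (simp add: b hmul_unit_left)
  finally have "lin S k1 = k0" .
  then have "Sinv S k0 = k1" by (metis Sinv_S)
  then show ?thesis using a1 by simp
qed

lemma conv_diff_left: "conv C (\<lambda>s. a s - b s) v x = conv C a v x - conv C b v x"
  by (simp add: conv_eq_pair2 left_diff_distrib)

lemma conv_lincomb_right:
  "conv C f (\<lambda>s. \<Sum>j\<in>J. d j * h j s) x = (\<Sum>j\<in>J. d j * conv C f (h j) x)"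
  by (simp add: conv_eq_pair2 sum_distrib_left mult.left_commute)

lemma conv_counit_left: "conv C E f x = f x"
  by (simp add: conv_eq_pair2 counit_left)

lemma conv_counit_right: "conv C f E x = f x"
  by (simp add: conv_eq_pair2 counit_right)

lemma hmul_diff_left: "hmul M (\<lambda>s. a s - b s) v z = hmul M a v z - hmul M b v z"
  by (simp add: hmul_eq_pair pair_diff_left)

lemma hmul_lincomb_right:
  "hmul M f (\<lambda>s. \<Sum>j\<in>J. d j * h j s) z = (\<Sum>j\<in>J. d j * hmul M f (h j) z)"
  by (simp add: hmul_eq_pair pair_sum_left pair_cmult_left)

lemma conv_sub_counit:
  "conv C (\<lambda>s. \<alpha> s - E s) v = (\<lambda>x. conv C \<alpha> v x - v x)"
  by (simp add: fun_eq_iff conv_diff_left conv_counit_left)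

lemma hmul_sub_unit: "hmul M (\<lambda>s. g s - U s) v = (\<lambda>z. hmul M g v z - v z)"
  by (simp add: fun_eq_iff hmul_diff_left hmul_unit_left)

section \<open>Projecting the Drinfeld double onto H* and onto H\<close>

lemma dmul_eq_pair2:
  "dmul M C S X Y (x,z) = pair2 (\<lambda>a b. X (a,b)) (\<lambda>a b. pair2 (\<lambda>c d. Y (c,d))
   (\<lambda>c d. dd b (\<lambda>i t. dd t (\<lambda>j k. pair (C x a) (\<lambda>q. tt k (\<lambda>r. mm r q (\<lambda>s. M s i c))) * M j d z))))"
proof -
  have conv: "conv C (bas a) g x = pair (C x a) g" for a g
  proof -
    have e: "\<And>p q. C x p q * bas a p * g q = bas a p * (C x p q * g q)" by (simp add: mult_ac)
    show ?thesis unfolding conv_def pair_def by (simp only: e sum_distrib_left[symmetric] sum_bas_left)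
  qed
  have hit: "hit M (bas i) (bas c) (Sinv S (bas k))
      = (\<lambda>q. tt k (\<lambda>r. mm r q (\<lambda>s. M s i c)))" for i c k
    by (rule ext) (simp add: hit_def hmul_eq_pair pair_hmul Sv_def)
  have hm: "hmul M (bas j) (bas d) z = M j d z" for j d by (simp add: hmul_bas)
  have dd2: "(\<Sum>i\<in>UNIV. \<Sum>j\<in>UNIV. \<Sum>k\<in>UNIV. (\<Sum>t\<in>UNIV. C b i t * C t j k) * F i j k)
      = dd b (\<lambda>i t. dd t (\<lambda>j k. F i j k))" for b F
  proof -
    have "(\<Sum>i\<in>UNIV. \<Sum>j\<in>UNIV. \<Sum>k\<in>UNIV. (\<Sum>t\<in>UNIV. C b i t * C t j k) * F i j k)
        = (\<Sum>i\<in>UNIV. \<Sum>j\<in>UNIV. \<Sum>k\<in>UNIV. \<Sum>t\<in>UNIV. C b i t * (C t j k * F i j k))"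
      by (simp add: sum_distrib_right mult.assoc)
    also have "\<dots> = (\<Sum>i\<in>UNIV. \<Sum>t\<in>UNIV. \<Sum>j\<in>UNIV. \<Sum>k\<in>UNIV. C b i t * (C t j k * F i j k))"
      by (rule sum.cong[OF refl], rule sum_rotate3)
    also have "\<dots> = dd b (\<lambda>i t. dd t (\<lambda>j k. F i j k))"
      by (simp only: pair2_def sum_distrib_left)
    finally show ?thesis .
  qed
  show ?thesis
    unfolding dmul_def
    apply (simp only: tens_def case_prod_conv conv hit hm dd2)
    by (simp only: pair2_def sum_distrib_left mult.assoc)
qed

lemma counit_left_multc: "dd t (\<lambda>j k. F k * (E j * c)) = F t * c"
proof -
  have "dd t (\<lambda>j k. F k * (E j * c)) = dd t (\<lambda>j k. E j * (F k * c))"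
    by (simp only: mult_ac)
  then show ?thesis by (simp only: counit_left)
qed

definition proj_dual :: "('i \<times> 'i \<Rightarrow> complex) \<Rightarrow> 'i vec" where
  "proj_dual W = (\<lambda>x. pair (\<lambda>b. W (x,b)) E)"

lemma pair2_counit_tensor: "pair2 Y2 (\<lambda>c d. G c * E d) = pair (\<lambda>c. pair (Y2 c) E) G"
  unfolding pair2_def pair_def sum_distrib_right by (simp add: mult_ac)

lemma proj_dual_dmul_eq:
  "proj_dual (dmul M C S X Y) x
    = pair2 (\<lambda>a b. X (a,b)) (\<lambda>a b. dd b (\<lambda>i t. pair (C x a) (\<lambda>q. tt t (\<lambda>r. mm r q (\<lambda>s. mm s i (proj_dual Y))))))"
proof -
  have "proj_dual (dmul M C S X Y) x
      = pair2 (\<lambda>a b. X (a,b)) (\<lambda>a b. pair2 (\<lambda>c d. Y (c,d))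
   (\<lambda>c d. dd b (\<lambda>i t. dd t (\<lambda>j k. pair (C x a) (\<lambda>q. tt k (\<lambda>r. mm r q (\<lambda>s. M s i c))) * (E j * E d)))))"
    unfolding proj_dual_def dmul_eq_pair2 by (simp only: pair_pair2_left pair_pair_left pair_cmult_left pair_multc_left counit_mult)
  also have "\<dots> = pair2 (\<lambda>a b. X (a,b)) (\<lambda>a b. pair2 (\<lambda>c d. Y (c,d))
   (\<lambda>c d. dd b (\<lambda>i t. pair (C x a) (\<lambda>q. tt t (\<lambda>r. mm r q (\<lambda>s. M s i c))) * E d)))"
    by (simp only: counit_left_multc)
  also have "\<dots> = pair2 (\<lambda>a b. X (a,b)) (\<lambda>a b. dd b (\<lambda>i t. pair (C x a) (\<lambda>q. tt t (\<lambda>r. mm r q (\<lambda>s. mm s i (proj_dual Y))))))"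
  proof -
    define Y2 where "Y2 = (\<lambda>c d. Y (c,d))"
    have P: "proj_dual Y = (\<lambda>c. pair (Y2 c) E)" unfolding proj_dual_def Y2_def ..
    show ?thesis unfolding P Y2_def[symmetric]
      by (simp only: pair_multc[symmetric] pair2_swap[of Y2] pair2_pair_swap[of Y2] pair2_counit_tensor[of Y2] pair_commute[of "\<lambda>c. pair (Y2 c) E"])
  qed
  finally show ?thesis .
qed

definition dual_action :: "('i \<times> 'i \<Rightarrow> complex) \<Rightarrow> 'i vec \<Rightarrow> 'i vec" where
  "dual_action A v = (\<lambda>x. pair2 (\<lambda>a b. A (a,b)) (\<lambda>a b. dd b (\<lambda>i t. pair (C x a) (\<lambda>q. tt t (\<lambda>r. mm r q (\<lambda>s. mm s i v))))))"

lemma proj_dual_dmul: "proj_dual (dmul M C S X Y) = dual_action X (proj_dual Y)"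
  by (rule ext) (simp only: proj_dual_dmul_eq dual_action_def)

lemma dual_action_dual_grouplike:
  assumes "dual_grouplike M U \<beta>"
  shows "dual_action A \<beta> x = conv C (proj_dual A) \<beta> x"
proof -
  have mb: "mm p q \<beta> = \<beta> p * \<beta> q" for p q
    using assms unfolding dual_grouplike_iff by blast
  have e: "\<And>t q i. tt t \<beta> * \<beta> q * \<beta> i
      = \<beta> q * (\<beta> i * tt t \<beta>)"
    by (simp add: mult_ac)
  have "dual_action A \<beta> x
      = pair2 (\<lambda>a b. A (a,b)) (\<lambda>a b. dd b (\<lambda>i t. pair (C x a) (\<lambda>q. \<beta> q * (\<beta> i * tt t \<beta>))))"
    unfolding dual_action_def by (simp only: mb pair_multc e)
  also have "\<dots> = pair2 (\<lambda>a b. A (a,b)) (\<lambda>a b. pair (C x a) \<beta> * E b)"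
    by (simp only: pair_multc pair2_multc conv_Sinv_dual_grouplike[OF assms] mult.commute[of "pair (C x _) \<beta>"])
  also have "\<dots> = conv C (proj_dual A) \<beta> x"
    unfolding conv_eq_pair2 proj_dual_def pair2_def pair_def sum_distrib_right sum_distrib_left
    apply (rule sum.cong[OF refl]) apply (subst sum.swap) by (simp add: mult_ac)
  finally show ?thesis .
qed

lemma dual_action_lincomb:
  "dual_action A (\<lambda>s. \<Sum>j\<in>J. d j * f j s) x
    = (\<Sum>j\<in>J. d j * dual_action A (f j) x)"
  unfolding dual_action_def by (simp only: pair_sum pair_cmult pair2_sum pair2_cmult)

lemma dual_action_cmult: "dual_action A (\<lambda>s. c * f s) x = c * dual_action A f x"
  unfolding dual_action_def by (simp only: pair_cmult pair2_cmult)

definition proj_H :: "('i \<times> 'i \<Rightarrow> complex) \<Rightarrow> 'i vec" where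
  "proj_H W = (\<lambda>z. pair (\<lambda>a. W (a,z)) U)"

definition proj_H_factor :: "'i \<Rightarrow> ('i \<times> 'i \<Rightarrow> complex) \<Rightarrow> 'i \<Rightarrow> complex" where
  "proj_H_factor b Z z = pair2 (\<lambda>c d. Z (c,d)) (\<lambda>c d. dd b (\<lambda>i t. dd t (\<lambda>j k. tt k (\<lambda>r. M r i c) * M j d z)))"

lemma pair_comult_unit: "pair (\<lambda>x. pair (C x a) G) U = U a * uu G"
proof -
  have "pair (\<lambda>x. pair (C x a) G) U = uu (\<lambda>x. dd x (\<lambda>p q. bas a p * G q))"
    by (simp add: pair_commute[of _ U] pair2_tensor)
  also have "\<dots> = U a * uu G" by (simp only: comult_unit pair_cmult) simp
  finally show ?thesis .
qed

lemma proj_H_dmul: "proj_H (dmul M C S Y Z) z = pair (proj_H Y) (\<lambda>b. proj_H_factor b Z z)"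
proof -
  define Y2 where "Y2 = (\<lambda>a b. Y (a,b))"
  have "proj_H (dmul M C S Y Z) z = pair2 Y2 (\<lambda>a b. pair2 (\<lambda>c d. Z (c,d))
   (\<lambda>c d. dd b (\<lambda>i t. dd t (\<lambda>j k. U a * uu (\<lambda>q. tt k (\<lambda>r. mm r q (\<lambda>s. M s i c))) * M j d z))))"
    unfolding proj_H_def dmul_eq_pair2 Y2_def by (simp only: pair_pair2_left pair_pair_left pair_multc_left pair_comult_unit)
  also have "\<dots> = pair2 Y2 (\<lambda>a b. U a * proj_H_factor b Z z)"
  proof -
    have e: "\<And>a b c d. U a * b * c = U a * (b * c)" by (simp add: mult_ac)
    show ?thesis unfolding proj_H_factor_def by (simp only: pair_swap[of U "Sv _"] unit_right e pair2_cmult)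
  qed
  also have "\<dots> = pair (proj_H Y) (\<lambda>b. proj_H_factor b Z z)"
    unfolding pair2_tensor_swap proj_H_def Y2_def ..
  finally show ?thesis .
qed

lemma Sinv_grouplike_left_pair:
  assumes "grouplike C E k0"
  shows "pair k0 (\<lambda>i. pair k0 (\<lambda>k. tt k (\<lambda>r. M r i c))) = U c"
proof -
  have "pair k0 (\<lambda>i. pair k0 (\<lambda>k. tt k (\<lambda>r. M r i c)))
      = pair k0 (\<lambda>k. pair k0 (\<lambda>i. tt k (\<lambda>r. M r i c)))"
    by (rule pair_swap)
  also have "\<dots> = pair k0 (\<lambda>k. tt k (\<lambda>r. pair k0 (\<lambda>i. M r i c)))"
    by (rule arg_cong[where f="pair k0"], rule ext, rule pair_swap)
  also have "\<dots> = pair (Sinv S k0) (\<lambda>r. pair k0 (\<lambda>i. M r i c))" by (simp only: pair_Sinv)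
  also have "\<dots> = hmul M (Sinv S k0) k0 c" by (simp only: hmul_eq_pair)
  also have "\<dots> = U c" by (simp only: Sinv_grouplike_left[OF assms])
  finally show ?thesis .
qed

lemma proj_H_factor_grouplike:
  assumes "grouplike C E k0"
  shows "pair k0 (\<lambda>b. proj_H_factor b Z z) = hmul M k0 (proj_H Z) z"
proof -
  define Z2 where "Z2 = (\<lambda>c d. Z (c,d))"
  have "pair k0 (\<lambda>b. proj_H_factor b Z z)
      = pair2 Z2 (\<lambda>c d. pair k0 (\<lambda>i. pair k0 (\<lambda>j. pair k0 (\<lambda>k. tt k (\<lambda>r. M r i c) * M j d z))))"
    unfolding proj_H_factor_def Z2_def[symmetric] by (simp only: pair2_pair_swap[symmetric] grouplike_comult_pair[OF assms])
  also have "\<dots> = pair2 Z2 (\<lambda>c d. U c * pair k0 (\<lambda>j. M j d z))"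
    by (simp only: pair_multc pair_cmult Sinv_grouplike_left_pair[OF assms])
  also have "\<dots> = pair (proj_H Z) (\<lambda>d. pair k0 (\<lambda>j. M j d z))"
    unfolding pair2_tensor_swap proj_H_def Z2_def ..
  also have "\<dots> = hmul M k0 (proj_H Z) z"
    unfolding hmul_eq_pair by (rule pair_swap)
  finally show ?thesis .
qed

lemma proj_dual_sum:
  "proj_dual (\<lambda>p. \<Sum>i\<in>I. W i p) x = (\<Sum>i\<in>I. proj_dual (W i) x)"
  unfolding proj_dual_def by (rule pair_sum_left)
lemma proj_H_sum: "proj_H (\<lambda>p. \<Sum>i\<in>I. W i p) x = (\<Sum>i\<in>I. proj_H (W i) x)"
  unfolding proj_H_def by (rule pair_sum_left)
lemma proj_dual_diff: "proj_dual (\<lambda>p. A p - B p) = (\<lambda>x. proj_dual A x - proj_dual B x)"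
  unfolding proj_dual_def by (simp add: pair_diff_left)
lemma proj_H_diff: "proj_H (\<lambda>p. A p - B p) = (\<lambda>x. proj_H A x - proj_H B x)"
  unfolding proj_H_def by (simp add: pair_diff_left)
lemma proj_dual_zero: "proj_dual (\<lambda>_. 0) = (\<lambda>_. 0)"
  unfolding proj_dual_def by (simp add: pair_def)
lemma proj_H_zero: "proj_H (\<lambda>_. 0) = (\<lambda>_. 0)"
  unfolding proj_H_def by (simp add: pair_def)
lemma proj_dual_tens: "proj_dual (tens f h) = (\<lambda>x. f x * pair h E)"
  by (simp add: proj_dual_def tens_def pair_cmult_left)
lemma proj_H_tens: "proj_H (tens f h) = (\<lambda>z. uu f * h z)"
  by (simp add: proj_H_def tens_def pair_commute[of _ U])
lemma proj_dual_dunit: "proj_dual (dunit U E) = E"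
  by (simp add: dunit_def proj_dual_tens counit_unit)
lemma proj_H_dunit: "proj_H (dunit U E) = U"
  by (simp add: dunit_def proj_H_tens counit_unit)

lemma proj_dual_dmul_lincomb:
  assumes "\<And>j. j \<in> J \<Longrightarrow> dual_grouplike M U (\<beta> j)"
    and "proj_dual Y = (\<lambda>s. \<Sum>j\<in>J. d j * \<beta> j s)"
  shows "proj_dual (dmul M C S X Y) = conv C (proj_dual X) (proj_dual Y)"
proof
  fix x
  have "proj_dual (dmul M C S X Y) x = (\<Sum>j\<in>J. d j * dual_action X (\<beta> j) x)"
    by (simp only: proj_dual_dmul assms(2) dual_action_lincomb)
  also have "\<dots> = (\<Sum>j\<in>J. d j * conv C (proj_dual X) (\<beta> j) x)"
    using assms(1) by (simp add: dual_action_dual_grouplike)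
  also have "\<dots> = conv C (proj_dual X) (proj_dual Y) x"
    by (simp only: assms(2) conv_lincomb_right)
  finally show "proj_dual (dmul M C S X Y) x = conv C (proj_dual X) (proj_dual Y) x" .
qed

lemma proj_H_dmul_grouplike_diff:
  assumes "grouplike C E g" and "proj_H Y = (\<lambda>s. g s - U s)"
  shows "proj_H (dmul M C S Y Z) = hmul M (\<lambda>s. g s - U s) (proj_H Z)"
proof
  fix z
  have "proj_H (dmul M C S Y Z) z = pair (\<lambda>b. g b - U b) (\<lambda>b. proj_H_factor b Z z)"
    by (simp only: proj_H_dmul assms(2))
  also have "\<dots> = hmul M (\<lambda>s. g s - U s) (proj_H Z) z"
    by (simp only: pair_diff_left proj_H_factor_grouplike[OF assms(1)] proj_H_factor_grouplike[OF grouplike_one]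
        hmul_diff_left)
  finally show "proj_H (dmul M C S Y Z) z = hmul M (\<lambda>s. g s - U s) (proj_H Z) z" .
qed

lemma drinfeld_u_eq:
  "drinfeld_u M C S U E
    = (\<lambda>p. \<Sum>i\<in>UNIV. dmul M C S (tens (\<lambda>x. Sv x i) U) (tens E (bas i)) p)"
  unfolding drinfeld_u_def emb_dual_def emb_H_def dual_antipode_def by (simp add: Sv_def)

lemma proj_dual_dmul_emb_H: "proj_dual (dmul M C S A (tens E h)) x = pair h E * proj_dual A x"
proof -
  have "proj_dual (dmul M C S A (tens E h)) x = dual_action A (\<lambda>s. pair h E * E s) x"
    by (simp only: proj_dual_dmul proj_dual_tens mult.commute[of "E _"])
  also have "\<dots> = pair h E * dual_action A E x" by (rule dual_action_cmult)
  also have "\<dots> = pair h E * proj_dual A x" by (simp only: dual_action_dual_grouplike[OF dual_grouplike_counit] conv_counit_right)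
  finally show ?thesis .
qed

lemma proj_dual_drinfeld_u: "proj_dual (drinfeld_u M C S U E) = E"
proof
  fix x
  have "proj_dual (drinfeld_u M C S U E) x
      = (\<Sum>i\<in>UNIV. pair (bas i) E * proj_dual (tens (\<lambda>x. Sv x i) U) x)"
    unfolding drinfeld_u_eq proj_dual_sum proj_dual_dmul_emb_H ..
  also have "\<dots> = (\<Sum>i\<in>UNIV. E i * Sv x i)" by (simp add: proj_dual_tens counit_unit)
  also have "\<dots> = tt x E" by (simp add: pair_def mult.commute)
  also have "\<dots> = E x" by (rule counit_Sinv)
  finally show "proj_dual (drinfeld_u M C S U E) x = E x" .
qed

lemma proj_H_dmul_emb_dual: "proj_H (dmul M C S (tens f U) Z) z = uu f * proj_H Z z"
proof -
  have "proj_H (dmul M C S (tens f U) Z) z = uu f * pair U (\<lambda>b. proj_H_factor b Z z)"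
    by (simp only: proj_H_dmul proj_H_tens pair_cmult_left)
  also have "\<dots> = uu f * proj_H Z z" by (simp only: proj_H_factor_grouplike[OF grouplike_one] hmul_unit_left)
  finally show ?thesis .
qed

lemma Sinv_one: "Sinv S U = U"
  using Sinv_S[of U] by (simp only: antipode_one)

lemma proj_H_drinfeld_u: "proj_H (drinfeld_u M C S U E) = U"
proof
  fix z
  have "proj_H (drinfeld_u M C S U E) z
      = (\<Sum>i\<in>UNIV. uu (\<lambda>x. Sv x i) * proj_H (tens E (bas i)) z)"
    unfolding drinfeld_u_eq proj_H_sum proj_H_dmul_emb_dual ..
  also have "\<dots> = (\<Sum>i\<in>UNIV. uu (\<lambda>x. Sv x i) * bas i z)" by (simp add: proj_H_tens counit_unit)
  also have "\<dots> = uu (\<lambda>x. Sv x z)" by (subst bas_commute) simp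
  also have "\<dots> = Sinv S U z" by (simp add: Sinv_eq_pair)
  also have "\<dots> = U z" by (simp only: Sinv_one)
  finally show "proj_H (drinfeld_u M C S U E) z = U z" .
qed

lemma proj_dual_dpow_drinfeld_u: "proj_dual (dpow M C S U E (drinfeld_u M C S U E) m) = E"
proof (induction m)
  case 0
  show ?case by (simp add: dunit_def proj_dual_tens counit_unit)
next
  case (Suc m)
  show ?case
    by (simp add: Suc.IH fun_eq_iff proj_dual_dmul dual_action_dual_grouplike[OF dual_grouplike_counit]
        conv_counit_right proj_dual_drinfeld_u)
qed

lemma proj_H_dpow_drinfeld_u: "proj_H (dpow M C S U E (drinfeld_u M C S U E) m) = U"
proof (induction m)
  case 0
  show ?case by (simp add: dunit_def proj_H_tens counit_unit)
next
  case (Suc m)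
  show ?case
    by (simp add: Suc.IH fun_eq_iff proj_H_dmul proj_H_drinfeld_u proj_H_factor_grouplike[OF grouplike_one]
        hmul_unit_left)
qed

lemma projections_alpha_u_g:
  fixes m :: nat
  assumes a: "dual_grouplike M U \<alpha>" and g: "grouplike C E g"
  defines "x0 \<equiv> dmul M C S (dmul M C S (emb_dual U \<alpha>) (dpow M C S U E (drinfeld_u M C S U E) m)) (emb_H E g)"
  shows "proj_dual x0 = \<alpha>" and "proj_H x0 = g"
proof -
  have gE: "pair g E = 1" using g unfolding grouplike_iff by blast
  have ua: "uu \<alpha> = 1" using a unfolding dual_grouplike_iff by blast
  show "proj_dual x0 = \<alpha>"
  proof
    fix x
    have "proj_dual x0 x = proj_dual (dmul M C S (tens \<alpha> U) (dpow M C S U E (drinfeld_u M C S U E) m)) x"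
      unfolding x0_def emb_H_def emb_dual_def by (simp only: proj_dual_dmul_emb_H gE mult_1_left)
    also have "\<dots> = \<alpha> x"
      using proj_dual_dpow_drinfeld_u[of m] by (simp add: proj_dual_dmul dual_action_dual_grouplike[OF dual_grouplike_counit] conv_counit_right proj_dual_tens counit_unit)
    finally show "proj_dual x0 x = \<alpha> x" .
  qed
  have proj_H_alpha_u: "proj_H (dmul M C S (tens \<alpha> U) (dpow M C S U E (drinfeld_u M C S U E) m)) = U"
    by (rule ext) (simp add: proj_H_dmul_emb_dual ua proj_H_dpow_drinfeld_u)
  show "proj_H x0 = g"
  proof
    fix z
    have "proj_H x0 z = pair U (\<lambda>b. proj_H_factor b (tens E g) z)"
      unfolding x0_def emb_H_def emb_dual_def by (simp only: proj_H_dmul proj_H_alpha_u)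
    also have "\<dots> = g z" by (simp add: proj_H_factor_grouplike[OF grouplike_one] hmul_unit_left proj_H_tens counit_unit)
    finally show "proj_H x0 z = g z" .
  qed
qed

section \<open>Unipotent characters and grouplike elements are trivial\<close>

lemma dual_grouplike_pair_hmul:
  assumes "dual_grouplike M U \<beta>"
  shows "pair \<beta> (hmul M x y) = pair \<beta> x * pair \<beta> y"
proof -
  have "mm p q \<beta> = \<beta> p * \<beta> q" for p q
    using assms unfolding dual_grouplike_iff by blast
  then show ?thesis
    by (simp add: pair_commute[of \<beta>] pair_hmul)
qed

lemma grouplike_pair_conv:
  assumes "grouplike C E g"
  shows "pair (conv C f f') g = pair f g * pair f' g"
  by (simp add: pair_commute[of _ g] conv_eq_pair2_fun grouplike_comult_pair[OF assms])

lemma dual_grouplike_conv_power: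
  assumes "dual_grouplike M U \<alpha>"
  shows "dual_grouplike M U ((conv C \<alpha> ^^ k) E)"
  by (induction k) (simp_all add: dual_grouplike_counit dual_grouplike_conv assms)

lemma grouplike_hmul_power:
  assumes "grouplike C E g"
  shows "grouplike C E ((hmul M g ^^ k) U)"
  by (induction k) (simp_all add: grouplike_one grouplike_hmul assms)

lemma conv_power_sub_counit_lincomb:
  "\<exists>d. (conv C (\<lambda>s. \<alpha> s - E s) ^^ n) E
      = (\<lambda>s. \<Sum>j\<le>n. d j * (conv C \<alpha> ^^ j) E s)"
proof (induction n)
  case 0
  show ?case by (rule exI[of _ "\<lambda>_. 1"]) simp
next
  case (Suc n)
  then obtain d where d: "(conv C (\<lambda>s. \<alpha> s - E s) ^^ n) E = (\<lambda>s. \<Sum>j\<le>n. d j * (conv C \<alpha> ^^ j) E s)"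
    by blast
  have "(conv C (\<lambda>s. \<alpha> s - E s) ^^ Suc n) E
      = (\<lambda>s. \<Sum>j\<le>n. d j * ((conv C \<alpha> ^^ Suc j) E s - (conv C \<alpha> ^^ j) E s))"
    by (simp add: d conv_sub_counit conv_lincomb_right right_diff_distrib sum_subtractf)
  also have "\<dots> = (\<lambda>s. \<Sum>j\<le>Suc n.
      ((if j = 0 then 0 else d (j - 1)) - (if j \<le> n then d j else 0)) * (conv C \<alpha> ^^ j) E s)"
    by (rule ext, rule sum_mult_diff_Suc)
  finally show ?case
    by (rule exI[of _ "\<lambda>j. (if j = 0 then 0 else d (j - 1)) - (if j \<le> n then d j else 0)"])
qed

lemma proj_dual_unipotent_power:
  assumes "dual_grouplike M U \<alpha>" and "proj_dual X = \<alpha>"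
  shows "proj_dual (dpow M C S U E (\<lambda>p. X p - dunit U E p) n)
      = (conv C (\<lambda>s. \<alpha> s - E s) ^^ n) E"
proof (induction n)
  case 0
  show ?case by (simp add: proj_dual_dunit)
next
  case (Suc n)
  obtain d where d: "(conv C (\<lambda>s. \<alpha> s - E s) ^^ n) E = (\<lambda>s. \<Sum>j\<le>n. d j * (conv C \<alpha> ^^ j) E s)"
    using conv_power_sub_counit_lincomb by blast
  have "proj_dual (dpow M C S U E (\<lambda>p. X p - dunit U E p) (Suc n))
      = conv C (proj_dual (\<lambda>p. X p - dunit U E p)) (proj_dual (dpow M C S U E (\<lambda>p. X p - dunit U E p) n))"
    unfolding dpow.simps
    by (rule proj_dual_dmul_lincomb[OF dual_grouplike_conv_power[OF assms(1)]]) (simp add: Suc.IH d)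
  then show ?case
    by (simp add: Suc.IH proj_dual_diff assms(2) proj_dual_dunit)
qed

lemma proj_H_unipotent_power:
  assumes "grouplike C E g" and "proj_H X = g"
  shows "proj_H (dpow M C S U E (\<lambda>p. X p - dunit U E p) n)
      = (hmul M (\<lambda>s. g s - U s) ^^ n) U"
proof (induction n)
  case 0
  show ?case by (simp add: proj_H_dunit)
next
  case (Suc n)
  have "proj_H (\<lambda>p. X p - dunit U E p) = (\<lambda>s. g s - U s)"
    by (simp add: proj_H_diff assms(2) proj_H_dunit)
  then show ?case
    by (simp add: proj_H_dmul_grouplike_diff[OF assms(1)] Suc.IH)
qed

lemma dual_grouplike_eq_counit_if_unipotent:
  assumes "dual_grouplike M U \<alpha>" and "(conv C (\<lambda>s. \<alpha> s - E s) ^^ n) E = (\<lambda>_. 0)"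
  shows "\<alpha> = E"
proof -
  let ?L = "conv C (\<lambda>s. \<alpha> s - E s)"
  have step: "conv C \<alpha> = (\<lambda>w s. w s + ?L w s)"
    by (simp add: fun_eq_iff conv_sub_counit)
  have power: "(conv C \<alpha> ^^ k) E
      = (\<lambda>s. \<Sum>j<n. of_nat (k choose j) * (?L ^^ j) E s)" for k
    unfolding step
    by (rule funpow_add_nilpotent_binomial[OF _ assms(2)]) (simp add: fun_eq_iff conv_lincomb_right)
  have "pair ((conv C \<alpha> ^^ k) E) h = pair ((conv C \<alpha> ^^ 0) E) h" for k h
  proof (rule binomial_sum_const_if_square_closed[where F = "\<lambda>h k. pair ((conv C \<alpha> ^^ k) E) h"
        and c = "\<lambda>h j. pair ((?L ^^ j) E) h"])
    show "pair ((conv C \<alpha> ^^ k) E) h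
        = (\<Sum>j<n. of_nat (k choose j) * pair ((?L ^^ j) E) h)" for k h
      by (simp add: power pair_sum_left pair_cmult_left)
    show "\<exists>h'. \<forall>k. pair ((conv C \<alpha> ^^ k) E) h'
        = (pair ((conv C \<alpha> ^^ k) E) h)^2" for h
      by (intro exI[of _ "hmul M h h"] allI)
        (simp add: power2_eq_square dual_grouplike_pair_hmul[OF dual_grouplike_conv_power[OF assms(1)]])
  qed
  from this[of 1 "bas _"] show ?thesis
    by (simp add: fun_eq_iff conv_counit_right)
qed

lemma grouplike_eq_one_if_unipotent:
  assumes "grouplike C E g" and "(hmul M (\<lambda>s. g s - U s) ^^ n) U = (\<lambda>_. 0)"
  shows "g = U"
proof -
  let ?L = "hmul M (\<lambda>s. g s - U s)"
  have step: "hmul M g = (\<lambda>w s. w s + ?L w s)"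
    by (simp add: fun_eq_iff hmul_sub_unit)
  have power: "(hmul M g ^^ k) U = (\<lambda>s. \<Sum>j<n. of_nat (k choose j) * (?L ^^ j) U s)" for k
    unfolding step
    by (rule funpow_add_nilpotent_binomial[OF _ assms(2)]) (simp add: fun_eq_iff hmul_lincomb_right)
  have "pair \<psi> ((hmul M g ^^ k) U) = pair \<psi> ((hmul M g ^^ 0) U)" for k \<psi>
  proof (rule binomial_sum_const_if_square_closed[where F = "\<lambda>\<psi> k. pair \<psi> ((hmul M g ^^ k) U)"
        and c = "\<lambda>\<psi> j. pair \<psi> ((?L ^^ j) U)"])
    show "pair \<psi> ((hmul M g ^^ k) U)
        = (\<Sum>j<n. of_nat (k choose j) * pair \<psi> ((?L ^^ j) U))" for k \<psi>
      by (simp add: power pair_commute[of \<psi>] pair_sum_left pair_cmult_left)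
    show "\<exists>\<psi>'. \<forall>k. pair \<psi>' ((hmul M g ^^ k) U)
        = (pair \<psi> ((hmul M g ^^ k) U))^2" for \<psi>
      by (intro exI[of _ "conv C \<psi> \<psi>"] allI)
        (simp add: power2_eq_square grouplike_pair_conv[OF grouplike_hmul_power[OF assms(1)]])
  qed
  from this[of "bas _" 1] show ?thesis
    by (simp add: fun_eq_iff hmul_unit_right)
qed

end

theorem mainTheorem10:
  fixes M C :: "'i::finite \<Rightarrow> 'i \<Rightarrow> 'i \<Rightarrow> complex"
    and U E g \<alpha> :: "'i vec"
    and S :: "'i \<Rightarrow> 'i \<Rightarrow> complex"
    and m :: nat
  assumes "hopf_algebra M U C E S"
    and "grouplike C E g"
    and "dual_grouplike M U \<alpha>"
    and "m > 0"
    and "unipotent M C S U E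
           (dmul M C S (dmul M C S (emb_dual U \<alpha>) (dpow M C S U E (drinfeld_u M C S U E) m))
              (emb_H E g))"
  shows "g = U \<and> \<alpha> = E"
proof -
  interpret hopf M U C E S
    by (rule hopf.intro) (rule assms(1))
  define x where "x = dmul M C S (dmul M C S (emb_dual U \<alpha>) (dpow M C S U E (drinfeld_u M C S U E) m)) (emb_H E g)"
  obtain n where nilpotent: "dpow M C S U E (\<lambda>p. x p - dunit U E p) n = (\<lambda>_. 0)"
    using assms(5) unfolding unipotent_def x_def by blast
  have "(conv C (\<lambda>s. \<alpha> s - E s) ^^ n) E
      = proj_dual (dpow M C S U E (\<lambda>p. x p - dunit U E p) n)"
    unfolding x_def by (rule proj_dual_unipotent_power[OF assms(3) projections_alpha_u_g(1)[OF assms(3,2)], symmetric])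
  then have "(conv C (\<lambda>s. \<alpha> s - E s) ^^ n) E = (\<lambda>_. 0)"
    by (simp add: nilpotent proj_dual_zero)
  moreover have "(hmul M (\<lambda>s. g s - U s) ^^ n) U
      = proj_H (dpow M C S U E (\<lambda>p. x p - dunit U E p) n)"
    unfolding x_def by (rule proj_H_unipotent_power[OF assms(2) projections_alpha_u_g(2)[OF assms(3,2)], symmetric])
  then have "(hmul M (\<lambda>s. g s - U s) ^^ n) U = (\<lambda>_. 0)"
    by (simp add: nilpotent proj_H_zero)
  ultimately show ?thesis
    using dual_grouplike_eq_counit_if_unipotent[OF assms(3)] grouplike_eq_one_if_unipotent[OF assms(2)] by blast
qed

end
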